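(* Let $X$ be a digraph. All eigenvalues of $H(X)$ lie in the open interval $(-\sqrt{3},\sqrt{3})$ if and only if every weakly connected component $Y$ of $X$ satisfies one of the following: $\Gamma(Y)$ is isomorphic to a path with at most $3$ edges (including a single vertex); or $\Gamma(Y)$ is isomorphic to the $4$-cycle $C_4$ and $Y$ is isomorphic either to $\widetilde{C}_4$ or to a strongly connected digraph with underlying graph $C_4$ having exactly two digons.
   Context: A digraph $X$ has a finite vertex set and an arc set of ordered pairs of distinct vertices; $\{x,y\}$ is a digon if both $xy,yx$ are arcs. The underlying graph $\Gamma(X)$ is the simple graph with an edge $\{x,y\}$ whenever $xy$ or $yx$ is an arc; weakly connected components of $X$ are the sub-digraphs induced on the components of $\Gamma(X)$. The Hermitian adjacency matrix $H(X)$ has $(u,v)$-entry $1$ if $uv$ and $vu$ are arcs, $i$ if only $uv$ is an arc, $-i$ if only $vu$ is an arc, and $0$ otherwise. $\widetilde{C}_4$ is the oriented graph on vertices $v_0,v_1,v_2,v_3$ with arcs $v_0v_1, v_1v_2, v_2v_3, v_0v_3$ (the directed $4$-cycle with one arc reversed). *)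

theory Defs
  imports "HOL-Analysis.Analysis"
begin

text \<open>A digraph X with (finite) vertex set UNIV :: 'n set and arc set A (irreflexive).\<close>

definition herm :: "('n::finite \<times> 'n) set \<Rightarrow> complex^'n^'n" where
  "herm A = (\<chi> u v. if (u,v) \<in> A \<and> (v,u) \<in> A then 1
                     else if (u,v) \<in> A then \<i>
                     else if (v,u) \<in> A then - \<i> else 0)"

definition mat_eigenvalue :: "complex^'n^'n \<Rightarrow> complex \<Rightarrow> bool" where
  "mat_eigenvalue M l \<longleftrightarrow> (\<exists>v. v \<noteq> 0 \<and> M *v v = l *s v)"

definition und :: "('a \<times> 'a) set \<Rightarrow> 'a \<Rightarrow> 'a \<Rightarrow> bool" where
  "und A x y \<longleftrightarrow> (x,y) \<in> A \<or> (y,x) \<in> A"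

definition weak_components :: "('a \<times> 'a) set \<Rightarrow> 'a set set" where
  "weak_components A = UNIV // ((A \<union> A\<inverse>)\<^sup>*)"

definition und_iso_path :: "('a \<times> 'a) set \<Rightarrow> 'a set \<Rightarrow> nat \<Rightarrow> bool" where
  "und_iso_path A C k \<longleftrightarrow> (\<exists>f. bij_betw f {0..k} C \<and>
     (\<forall>i\<in>{0..k}. \<forall>j\<in>{0..k}. und A (f i) (f j) \<longleftrightarrow> (i = j + 1 \<or> j = i + 1)))"

definition und_iso_C4 :: "('a \<times> 'a) set \<Rightarrow> 'a set \<Rightarrow> bool" where
  "und_iso_C4 A C \<longleftrightarrow> (\<exists>f. bij_betw f {0..<4::nat} C \<and>
     (\<forall>i\<in>{0..<4}. \<forall>j\<in>{0..<4}. und A (f i) (f j) \<longleftrightarrow> (j = (i + 1) mod 4 \<or> i = (j + 1) mod 4)))"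

definition iso_tilde_C4 :: "('a \<times> 'a) set \<Rightarrow> 'a set \<Rightarrow> bool" where
  "iso_tilde_C4 A C \<longleftrightarrow> (\<exists>f. bij_betw f {0..<4::nat} C \<and>
     (\<forall>i\<in>{0..<4}. \<forall>j\<in>{0..<4}. (f i, f j) \<in> A \<longleftrightarrow> (i, j) \<in> {(0,1),(1,2),(2,3),(0,3)}))"

definition strongly_connected_on :: "('a \<times> 'a) set \<Rightarrow> 'a set \<Rightarrow> bool" where
  "strongly_connected_on A C \<longleftrightarrow> (\<forall>x\<in>C. \<forall>y\<in>C. (x,y) \<in> (A \<inter> C \<times> C)\<^sup>*)"

definition digons_on :: "('a \<times> 'a) set \<Rightarrow> 'a set \<Rightarrow> 'a set set" where
  "digons_on A C = {{x,y} | x y. x \<in> C \<and> y \<in> C \<and> (x,y) \<in> A \<and> (y,x) \<in> A}"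

end

theory Submission
  imports Defs
begin

text \<open>Since \<open>H = H(X)\<close> is Hermitian, its spectrum lies in \<open>(-\<surd>3, \<surd>3)\<close> exactly when
  \<open>\<parallel>H v\<parallel>\<^sup>2 < 3 \<parallel>v\<parallel>\<^sup>2\<close> for all \<open>v \<noteq> 0\<close>, and this quadratic inequality splits over the weak components.
  On a path with at most three edges it follows from the triangle inequality row by row and a
  sum-of-squares identity; on a four-cycle whose gain \<open>H\<^sub>0\<^sub>1 H\<^sub>1\<^sub>2 H\<^sub>2\<^sub>3 H\<^sub>3\<^sub>0\<close> is \<open>-1\<close> one even has
  \<open>H\<^sup>2 = 2 I\<close>, and the two digraph classes of the theorem are exactly the four-cycles of gain \<open>-1\<close>.
  Conversely, test vectors supported on one or two vertices rule out a vertex of degree three, two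
  vertices of degree two with exactly one common neighbour, and a four-cycle of gain \<open>\<noteq> -1\<close>; a
  connected graph avoiding the first two is a path with at most three edges or a four-cycle.\<close>

section \<open>Entries of the Hermitian adjacency matrix\<close>

abbreviation hentry :: "('n::finite \<times> 'n) set \<Rightarrow> 'n \<Rightarrow> 'n \<Rightarrow> complex" where
  "hentry A u v \<equiv> herm A $ u $ v"

lemma hentry_eq: "hentry A u v = (if (u,v) \<in> A \<and> (v,u) \<in> A then 1
                     else if (u,v) \<in> A then \<i> else if (v,u) \<in> A then - \<i> else 0)"
  by (simp add: herm_def)

lemma cnj_hentry: "cnj (hentry A u v) = hentry A v u"
  by (simp add: hentry_eq)

lemma und_commute: "und A u v = und A v u"
  by (auto simp: und_def)

lemma norm_hentry: "cmod (hentry A u v) = (if und A u v then 1 else 0)"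
  by (auto simp: hentry_eq und_def)

lemma hentry_eq_0_iff: "hentry A u v = 0 \<longleftrightarrow> \<not> und A u v"
  by (auto simp: hentry_eq und_def)

lemma hentry_cases: "und A u v \<Longrightarrow> hentry A u v \<in> {1, \<i>, - \<i>}"
  by (auto simp: hentry_eq und_def)

lemma hentry_mult_commute: "und A u v \<Longrightarrow> hentry A u v * hentry A v u = 1"
  by (auto simp: hentry_eq und_def)

lemma hentry_eq_1_iff: "hentry A u v = 1 \<longleftrightarrow> (u,v) \<in> A \<and> (v,u) \<in> A"
  by (simp add: hentry_eq complex_eq_iff)

lemma hentry_eq_i_iff: "hentry A u v = \<i> \<longleftrightarrow> (u,v) \<in> A \<and> (v,u) \<notin> A"
  by (simp add: hentry_eq complex_eq_iff)

lemma hentry_eq_minus_i_iff: "hentry A u v = - \<i> \<longleftrightarrow> (u,v) \<notin> A \<and> (v,u) \<in> A"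
  by (simp add: hentry_eq complex_eq_iff)

section \<open>Spectral bounds for Hermitian matrices\<close>

definition hermitian :: "complex^'n^'n \<Rightarrow> bool" where
  "hermitian M \<longleftrightarrow> (\<forall>i j. M $ i $ j = cnj (M $ j $ i))"

definition norm_sq_bound :: "complex^'n^'n \<Rightarrow> real \<Rightarrow> bool" where
  "norm_sq_bound M c \<longleftrightarrow> (\<forall>v. v \<noteq> 0 \<longrightarrow> (norm (M *v v))\<^sup>2 < c * (norm v)\<^sup>2)"

lemma hermitian_herm: "hermitian (herm A)"
  unfolding hermitian_def by (simp add: hentry_eq)

lemma matrix_vector_mult_component: "(M *v x) $ i = (\<Sum>j\<in>UNIV. M $ i $ j * x $ j)"
  by (simp add: matrix_vector_mult_def)

lemma norm_vec_sq: "(norm (x::complex^'n))\<^sup>2 = (\<Sum>i\<in>UNIV. (cmod (x $ i))\<^sup>2)"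
  by (simp add: norm_vec_def L2_set_def sum_nonneg)

lemma inner_vec_complex: "inner (x::complex^'n) y = Re (\<Sum>i\<in>UNIV. cnj (x $ i) * y $ i)"
  by (simp add: inner_vec_def inner_complex_def)

lemma hermitian_inner_commute:
  assumes "hermitian M"
  shows "inner (M *v x) y = inner x (M *v y)"
proof -
  have cnj_M: "cnj (M $ i $ j) = M $ j $ i" for i j
    using assms unfolding hermitian_def by (metis complex_cnj_cnj)
  have "(\<Sum>i\<in>UNIV. cnj ((M *v x) $ i) * y $ i)
      = (\<Sum>i\<in>UNIV. \<Sum>j\<in>UNIV. M $ j $ i * cnj (x $ j) * y $ i)"
    by (simp add: cnj_M matrix_vector_mult_component sum_distrib_right)
  also have "\<dots> = (\<Sum>j\<in>UNIV. \<Sum>i\<in>UNIV. M $ j $ i * cnj (x $ j) * y $ i)"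
    by (rule sum.swap)
  also have "\<dots> = (\<Sum>j\<in>UNIV. cnj (x $ j) * (M *v y) $ j)"
    unfolding matrix_vector_mult_component sum_distrib_left
    by (intro sum.cong refl) (simp add: mult.commute mult.left_commute)
  finally show ?thesis
    by (simp add: inner_vec_complex)
qed

lemma nonneg_quadratic_imp_linear_coeff_0:
  fixes a b :: real
  assumes "\<And>t. 0 \<le> 2 * t * a + t\<^sup>2 * b" and "0 \<le> b"
  shows "a = 0"
proof (rule ccontr)
  assume "a \<noteq> 0"
  define t where "t = - a / (b + 1)"
  have bt: "(b + 1) * t = - a"
    using \<open>0 \<le> b\<close> by (simp add: t_def)
  have "0 \<le> (b + 1)\<^sup>2 * (2 * t * a + t\<^sup>2 * b)"
    using assms(1) by simp
  also have "\<dots> = 2 * (b + 1) * ((b + 1) * t) * a + ((b + 1) * t)\<^sup>2 * b"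
    by (simp add: algebra_simps power2_eq_square)
  also have "\<dots> = - (a\<^sup>2 * (b + 2))"
    unfolding bt by (simp add: algebra_simps power2_eq_square)
  finally show False
    using \<open>a \<noteq> 0\<close> \<open>0 \<le> b\<close> by (smt (verit) mult_pos_pos zero_less_power2)
qed

lemma scaleR_eq_vector_scalar_mult: "(r::real) *\<^sub>R (v::complex^'n) = complex_of_real r *s v"
  unfolding vec_eq_iff
  by (simp only: vector_scaleR_component vector_scalar_mult_def vec_lambda_beta
      scaleR_conv_of_real[where 'a=complex] simp_thms)

lemma norm_add_scaleR_sq:
  "(norm (x + t *\<^sub>R y))\<^sup>2 = (norm x)\<^sup>2 + 2 * t * inner x y + t\<^sup>2 * (norm (y::'a::real_inner))\<^sup>2"
  unfolding power2_norm_eq_inner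
  by (simp add: inner_add_left inner_add_right inner_commute algebra_simps power2_eq_square)

lemma norm_vector_scalar_mult_sq: "(norm (c *s (x::complex^'n)))\<^sup>2 = (cmod c)\<^sup>2 * (norm x)\<^sup>2"
  by (simp add: norm_vec_sq sum_distrib_left norm_mult power_mult_distrib)

lemma matrix_norm_sq_attained:
  fixes M :: "complex^'n^'n"
  obtains v0 where "norm v0 = 1" "\<And>v. (norm (M *v v))\<^sup>2 \<le> (norm (M *v v0))\<^sup>2 * (norm v)\<^sup>2"
proof -
  define g where "g v = (norm (M *v v))\<^sup>2" for v :: "complex^'n"
  have "continuous_on (sphere 0 1) g"
    unfolding g_def by (intro continuous_intros)
  moreover have "sphere (0::complex^'n) 1 \<noteq> {}"
    by simp
  ultimately obtain v0 where v0: "v0 \<in> sphere 0 1" and v0max: "\<forall>y\<in>sphere 0 1. g y \<le> g v0"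
    using continuous_attains_sup[OF compact_sphere] by blast
  have "g v \<le> g v0 * (norm v)\<^sup>2" for v
  proof (cases "v = 0")
    case False
    define u where "u = (1 / norm v) *\<^sub>R v"
    have "M *v u = (1 / norm v) *\<^sub>R (M *v v)"
      unfolding u_def scaleR_eq_vector_scalar_mult by (rule vector_scalar_commute)
    hence "g v = (norm v)\<^sup>2 * g u"
      using False by (simp add: g_def power_divide)
    also have "\<dots> \<le> (norm v)\<^sup>2 * g v0"
      using v0max False by (simp add: u_def mult_left_mono)
    finally show ?thesis
      by (simp add: mult.commute)
  qed (simp add: g_def)
  moreover have "norm v0 = 1"
    using v0 by simp
  ultimately show ?thesis
    using that unfolding g_def by blast
qed

text \<open>A maximiser \<open>v\<^sub>0\<close> of \<open>\<parallel>M v\<parallel>\<close> on the unit sphere is an eigenvector of \<open>M\<^sup>2\<close>: the quadratic form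
  \<open>Q v = \<mu> \<parallel>v\<parallel>\<^sup>2 - \<parallel>M v\<parallel>\<^sup>2\<close> is nonnegative and vanishes at \<open>v\<^sub>0\<close>, and its first variation there in the
  direction \<open>u = \<mu> v\<^sub>0 - M\<^sup>2 v\<^sub>0\<close> is \<open>2 \<parallel>u\<parallel>\<^sup>2\<close>.\<close>

lemma hermitian_square_eigenvector:
  fixes M :: "complex^'n^'n"
  assumes herm: "hermitian M" and "w \<noteq> 0" and big: "c * (norm w)\<^sup>2 \<le> (norm (M *v w))\<^sup>2"
  obtains v \<mu> where "v \<noteq> 0" "0 \<le> \<mu>" "c \<le> \<mu>" "M *v (M *v v) = \<mu> *\<^sub>R v"
proof -
  obtain v0 where v0: "norm v0 = 1"
    and bound: "\<And>v. (norm (M *v v))\<^sup>2 \<le> (norm (M *v v0))\<^sup>2 * (norm v)\<^sup>2"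
    using matrix_norm_sq_attained[of M] by blast
  define \<mu> where "\<mu> = (norm (M *v v0))\<^sup>2"
  define T where "T v = M *v v" for v :: "complex^'n"
  have linT: "T (x + y) = T x + T y" "T (s *\<^sub>R x) = s *\<^sub>R T x" "T (x - y) = T x - T y" for x y s
    using linear_iff[of "\<lambda>x. M *v x"] matrix_vector_mul_linear[of M]
    by (simp_all add: T_def matrix_vector_right_distrib matrix_vector_mult_diff_distrib)
  have symT: "inner (T x) y = inner x (T y)" for x y
    unfolding T_def by (rule hermitian_inner_commute[OF herm])
  have "c * (norm w)\<^sup>2 \<le> \<mu> * (norm w)\<^sup>2"
    using bound[of w] big by (simp add: \<mu>_def)
  hence "c \<le> \<mu>"
    using \<open>w \<noteq> 0\<close> by simp
  define Q where "Q v = \<mu> * (norm v)\<^sup>2 - (norm (T v))\<^sup>2" for v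
  define u where "u = \<mu> *\<^sub>R v0 - T (T v0)"
  have Q_nonneg: "0 \<le> Q v" for v
    using bound[of v] by (simp add: Q_def T_def \<mu>_def)
  have "Q v0 = 0"
    using v0 by (simp add: Q_def T_def \<mu>_def)
  moreover have "Q (v0 + t *\<^sub>R u) = Q v0 + 2 * t * (\<mu> * inner v0 u - inner (T v0) (T u)) + t\<^sup>2 * Q u" for t
    unfolding Q_def linT norm_add_scaleR_sq by (simp add: algebra_simps)
  moreover have "\<mu> * inner v0 u - inner (T v0) (T u) = (norm u)\<^sup>2"
    by (simp add: symT u_def power2_norm_eq_inner inner_diff_left)
  ultimately have "(norm u)\<^sup>2 = 0"
    using Q_nonneg nonneg_quadratic_imp_linear_coeff_0 by (metis add_0 zero_le_power2)
  hence "M *v (M *v v0) = \<mu> *\<^sub>R v0"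
    by (simp add: u_def T_def)
  moreover have "v0 \<noteq> 0" "0 \<le> \<mu>"
    using v0 by (auto simp: \<mu>_def)
  ultimately show ?thesis
    using that \<open>c \<le> \<mu>\<close> by blast
qed

lemma eigenvalue_of_square_eigenvector:
  fixes M :: "complex^'n^'n"
  assumes sq: "M *v (M *v v) = (s * s) *\<^sub>R v" and "v \<noteq> 0"
  shows "mat_eigenvalue M (of_real s) \<or> mat_eigenvalue M (of_real (- s))"
proof (cases "M *v v + of_real s *s v = 0")
  case True
  hence "M *v v = - (of_real s *s v)"
    by (simp add: add_eq_0_iff2)
  hence "M *v v = of_real (- s) *s v"
    by (simp add: vec_eq_iff vector_scalar_mult_def)
  thus ?thesis
    using \<open>v \<noteq> 0\<close> unfolding mat_eigenvalue_def by blast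
next
  case False
  define x where "x = M *v v + of_real s *s v"
  have "M *v x = M *v (M *v v) + of_real s *s (M *v v)"
    by (simp add: x_def matrix_vector_right_distrib vector_scalar_commute)
  also have "\<dots> = of_real s *s x"
    unfolding sq x_def scaleR_eq_vector_scalar_mult
    by (simp add: vec_eq_iff vector_scalar_mult_def algebra_simps)
  finally have "M *v x = of_real s *s x" .
  thus ?thesis
    using False unfolding mat_eigenvalue_def x_def by blast
qed

lemma inner_vector_scalar_mult:
  "inner (a *s x) (b *s x) = Re (cnj a * b) * (norm (x::complex^'n))\<^sup>2"
proof -
  have "Re (cnj ((a *s x) $ i) * (b *s x) $ i) = Re (cnj a * b) * (cmod (x $ i))\<^sup>2" for i
  proof -
    have "cnj ((a *s x) $ i) * (b *s x) $ i = (cnj a * b) * (cnj (x $ i) * x $ i)"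
      by (simp add: mult_ac)
    also have "cnj (x $ i) * x $ i = complex_of_real ((cmod (x $ i))\<^sup>2)"
      by (subst complex_norm_square) (rule mult.commute)
    finally have "cnj ((a *s x) $ i) * (b *s x) $ i
        = (cnj a * b) * complex_of_real ((cmod (x $ i))\<^sup>2)" .
    moreover have "Re (z * complex_of_real t) = Re z * t" for z t
      by simp
    ultimately show ?thesis
      by presburger
  qed
  thus ?thesis
    by (simp add: inner_vec_complex norm_vec_sq sum_distrib_left)
qed

lemma hermitian_eigenvalue_real:
  assumes "hermitian M" and "mat_eigenvalue M l"
  shows "l = of_real (Re l)"
proof -
  obtain v where "v \<noteq> 0" and ev: "M *v v = l *s v"
    using assms(2) unfolding mat_eigenvalue_def by blast
  have "inner (M *v v) (\<i> *s v) = inner v (M *v (\<i> *s v))"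
    by (rule hermitian_inner_commute[OF assms(1)])
  hence "inner (l *s v) (\<i> *s v) = inner (1 *s v) ((\<i> * l) *s v)"
    by (simp add: vector_scalar_commute ev vector_smult_assoc)
  hence "Re (cnj l * \<i>) = Re (\<i> * l)"
    using \<open>v \<noteq> 0\<close> unfolding inner_vector_scalar_mult by simp
  thus ?thesis
    by (simp add: complex_eq_iff)
qed

lemma hermitian_eigenvalue_sq_ge:
  fixes M :: "complex^'n^'n"
  assumes "hermitian M" and "w \<noteq> 0" and "c * (norm w)\<^sup>2 \<le> (norm (M *v w))\<^sup>2"
  obtains r where "mat_eigenvalue M (of_real r)" "c \<le> r\<^sup>2"
proof -
  obtain v \<mu> where "v \<noteq> 0" "0 \<le> \<mu>" "c \<le> \<mu>" and sq: "M *v (M *v v) = \<mu> *\<^sub>R v"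
    using hermitian_square_eigenvector[OF assms] by blast
  define s where "s = sqrt \<mu>"
  have "s * s = \<mu>" "(- s) * (- s) = \<mu>"
    using \<open>0 \<le> \<mu>\<close> by (simp_all add: s_def)
  hence "M *v (M *v v) = (s * s) *\<^sub>R v"
    using sq by simp
  hence "mat_eigenvalue M (of_real s) \<or> mat_eigenvalue M (of_real (- s))"
    by (rule eigenvalue_of_square_eigenvector[OF _ \<open>v \<noteq> 0\<close>])
  moreover have "c \<le> s\<^sup>2" "c \<le> (- s)\<^sup>2"
    using \<open>s * s = \<mu>\<close> \<open>c \<le> \<mu>\<close> by (simp_all add: power2_eq_square)
  ultimately show ?thesis
    using that by blast
qed

lemma hermitian_eigenvalues_bound_iff:
  fixes M :: "complex^'n^'n"
  assumes herm: "hermitian M"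
  shows "(\<forall>l. mat_eigenvalue M l \<longrightarrow> (\<exists>r. l = of_real r \<and> r\<^sup>2 < c)) \<longleftrightarrow> norm_sq_bound M c"
proof
  assume eig: "\<forall>l. mat_eigenvalue M l \<longrightarrow> (\<exists>r. l = of_real r \<and> r\<^sup>2 < c)"
  show "norm_sq_bound M c"
    unfolding norm_sq_bound_def
  proof (intro allI impI, rule ccontr)
    fix w :: "complex^'n"
    assume "w \<noteq> 0" and "\<not> (norm (M *v w))\<^sup>2 < c * (norm w)\<^sup>2"
    hence "c * (norm w)\<^sup>2 \<le> (norm (M *v w))\<^sup>2"
      by simp
    then obtain r where "mat_eigenvalue M (of_real r)" "c \<le> r\<^sup>2"
      by (rule hermitian_eigenvalue_sq_ge[OF herm \<open>w \<noteq> 0\<close>])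
    moreover from this obtain r' where "of_real r = (of_real r' :: complex)" "r'\<^sup>2 < c"
      using eig by blast
    ultimately show False
      by simp
  qed
next
  assume bound: "norm_sq_bound M c"
  show "\<forall>l. mat_eigenvalue M l \<longrightarrow> (\<exists>r. l = of_real r \<and> r\<^sup>2 < c)"
  proof (intro allI impI)
    fix l
    assume ev: "mat_eigenvalue M l"
    then obtain v where "v \<noteq> 0" and Mv: "M *v v = l *s v"
      unfolding mat_eigenvalue_def by blast
    have "(norm (M *v v))\<^sup>2 < c * (norm v)\<^sup>2"
      using bound \<open>v \<noteq> 0\<close> unfolding norm_sq_bound_def by blast
    hence "(cmod l)\<^sup>2 * (norm v)\<^sup>2 < c * (norm v)\<^sup>2"
      unfolding Mv norm_vector_scalar_mult_sq .
    hence "(cmod l)\<^sup>2 < c"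
      using \<open>v \<noteq> 0\<close> by simp
    moreover have "l = of_real (Re l)"
      by (rule hermitian_eigenvalue_real[OF herm ev])
    ultimately show "\<exists>r. l = of_real r \<and> r\<^sup>2 < c"
      by (metis norm_of_real power2_abs)
  qed
qed

section \<open>Weak components\<close>

lemma equiv_weak_rel: "equiv UNIV ((A \<union> A\<inverse>)\<^sup>*)"
  unfolding equiv_def by (auto simp: refl_rtrancl sym_rtrancl sym_Un_converse trans_rtrancl)

lemma weak_component_eq_Image:
  assumes "C \<in> weak_components A" and "x \<in> C"
  shows "C = (A \<union> A\<inverse>)\<^sup>* `` {x}"
proof -
  obtain y where y: "C = (A \<union> A\<inverse>)\<^sup>* `` {y}"
    using assms(1) unfolding weak_components_def by (auto elim: quotientE)
  with assms(2) have "(y, x) \<in> (A \<union> A\<inverse>)\<^sup>*"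
    by simp
  thus ?thesis
    using y equiv_class_eq[OF equiv_weak_rel] by metis
qed

lemma Image_weak_rel_in_weak_components: "(A \<union> A\<inverse>)\<^sup>* `` {u} \<in> weak_components A"
  unfolding weak_components_def by (rule quotientI) simp

lemma weak_component_nonempty: "C \<in> weak_components A \<Longrightarrow> C \<noteq> {}"
  unfolding weak_components_def by (metis equiv_weak_rel in_quotient_imp_non_empty)

lemma weak_component_und_closed:
  "C \<in> weak_components A \<Longrightarrow> x \<in> C \<Longrightarrow> und A x y \<Longrightarrow> y \<in> C"
  using weak_component_eq_Image[of C A x] by (auto simp: und_def)

lemma weak_component_eqI:
  assumes C: "C \<in> weak_components A" and "S \<subseteq> C" "x \<in> S"
    and closed: "\<And>a b. a \<in> S \<Longrightarrow> und A a b \<Longrightarrow> b \<in> S"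
  shows "S = C"
proof
  show "C \<subseteq> S"
  proof
    fix y
    assume "y \<in> C"
    hence "(x, y) \<in> (A \<union> A\<inverse>)\<^sup>*"
      using weak_component_eq_Image[OF C, of x] \<open>S \<subseteq> C\<close> \<open>x \<in> S\<close> by auto
    thus "y \<in> S"
    proof (induction rule: rtrancl_induct)
      case (step y z)
      thus ?case
        using closed by (auto simp: und_def)
    qed (rule \<open>x \<in> S\<close>)
  qed
qed (rule \<open>S \<subseteq> C\<close>)

lemma sum_weak_components:
  fixes A :: "('n::finite \<times> 'n) set"
  shows "(\<Sum>u\<in>UNIV. f u) = (\<Sum>C\<in>weak_components A. \<Sum>u\<in>C. f u)"
proof -
  have "UNIV = \<Union>(weak_components A)"
    unfolding weak_components_def by (rule Union_quotient[OF equiv_weak_rel, symmetric])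
  thus ?thesis
    using sum.Union_disjoint[of "weak_components A" f]
    by (auto simp: weak_components_def dest: quotient_disj[OF equiv_weak_rel])
qed

lemma herm_row_weak_component:
  fixes A :: "('n::finite \<times> 'n) set"
  assumes "C \<in> weak_components A" and "u \<in> C"
  shows "(herm A *v v) $ u = (\<Sum>x\<in>C. hentry A u x * v $ x)"
  unfolding matrix_vector_mult_component
  by (rule sum.mono_neutral_right)
    (auto simp: hentry_eq_0_iff intro: weak_component_und_closed[OF assms])

section \<open>The norm bound on admissible components\<close>

definition sqnorm_on :: "'n set \<Rightarrow> complex^'n \<Rightarrow> real" where
  "sqnorm_on C v = (\<Sum>u\<in>C. (cmod (v $ u))\<^sup>2)"

definition herm_sqnorm_on :: "('n::finite \<times> 'n) set \<Rightarrow> 'n set \<Rightarrow> complex^'n \<Rightarrow> real" where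
  "herm_sqnorm_on A C v = (\<Sum>u\<in>C. (cmod (\<Sum>x\<in>C. hentry A u x * v $ x))\<^sup>2)"

lemma sqnorm_on_pos: "finite C \<Longrightarrow> u \<in> C \<Longrightarrow> v $ u \<noteq> 0 \<Longrightarrow> 0 < sqnorm_on C v"
  unfolding sqnorm_on_def by (rule sum_pos2[where i=u]) auto

lemma norm_sq_bound_herm_if_weak_components:
  fixes A :: "('n::finite \<times> 'n) set"
  assumes comp: "\<And>C v. C \<in> weak_components A \<Longrightarrow> \<exists>u\<in>C. v $ u \<noteq> 0 \<Longrightarrow>
      herm_sqnorm_on A C v < 3 * sqnorm_on C v"
  shows "norm_sq_bound (herm A) 3"
  unfolding norm_sq_bound_def
proof (intro allI impI)
  fix v :: "complex^'n"
  assume "v \<noteq> 0"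
  have image: "(norm (herm A *v v))\<^sup>2 = (\<Sum>C\<in>weak_components A. herm_sqnorm_on A C v)"
    unfolding norm_vec_sq sum_weak_components[of _ A] herm_sqnorm_on_def
    by (intro sum.cong refl) (simp add: herm_row_weak_component)
  have "(norm v)\<^sup>2 = (\<Sum>C\<in>weak_components A. sqnorm_on C v)"
    unfolding norm_vec_sq sum_weak_components[of _ A] sqnorm_on_def ..
  moreover have "(\<Sum>C\<in>weak_components A. herm_sqnorm_on A C v)
      < (\<Sum>C\<in>weak_components A. 3 * sqnorm_on C v)"
  proof (rule sum_strict_mono_ex1)
    show "\<forall>C\<in>weak_components A. herm_sqnorm_on A C v \<le> 3 * sqnorm_on C v"
    proof
      fix C
      assume "C \<in> weak_components A"
      show "herm_sqnorm_on A C v \<le> 3 * sqnorm_on C v"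
      proof (cases "\<exists>u\<in>C. v $ u \<noteq> 0")
        case True
        show ?thesis
          by (rule less_imp_le, rule comp[OF \<open>C \<in> weak_components A\<close> True])
      next
        case False
        thus ?thesis
          by (simp add: herm_sqnorm_on_def sqnorm_on_def)
      qed
    qed
    obtain u where "v $ u \<noteq> 0"
      using \<open>v \<noteq> 0\<close> by (auto simp: vec_eq_iff)
    hence "herm_sqnorm_on A ((A \<union> A\<inverse>)\<^sup>* `` {u}) v < 3 * sqnorm_on ((A \<union> A\<inverse>)\<^sup>* `` {u}) v"
      by (intro comp[OF Image_weak_rel_in_weak_components]) auto
    thus "\<exists>C\<in>weak_components A. herm_sqnorm_on A C v < 3 * sqnorm_on C v"
      by (rule bexI[OF _ Image_weak_rel_in_weak_components])
    show "finite (weak_components A)"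
      by simp
  qed
  ultimately show "(norm (herm A *v v))\<^sup>2 < 3 * (norm v)\<^sup>2"
    unfolding image by (simp add: sum_distrib_left)
qed

lemma norm_mult_le: "cmod a \<le> 1 \<Longrightarrow> cmod (a * x) \<le> cmod x"
  by (simp add: norm_mult mult_left_le_one_le)

text \<open>After bounding each row by the triangle inequality, the claim follows because, with
  \<open>p\<^sub>j = |y\<^sub>j|\<close>, the bound falls short of \<open>3 \<Sum> p\<^sub>j\<^sup>2\<close> by exactly
  \<open>(p\<^sub>0 - p\<^sub>2)\<^sup>2 + (p\<^sub>1 - p\<^sub>3)\<^sup>2 + p\<^sub>0\<^sup>2 + p\<^sub>3\<^sup>2\<close>, which vanishes only for \<open>y = 0\<close>.\<close>

lemma path4_sq_bound:
  fixes g :: "nat \<Rightarrow> nat \<Rightarrow> complex" and y :: "nat \<Rightarrow> complex"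
  assumes g: "\<And>i j. i < 4 \<Longrightarrow> j < 4 \<Longrightarrow> cmod (g i j) \<le> (if i = j + 1 \<or> j = i + 1 then 1 else 0)"
    and "\<exists>j<4. y j \<noteq> 0"
  shows "(\<Sum>i<4. (cmod (\<Sum>j<4. g i j * y j))\<^sup>2) < 3 * (\<Sum>j<4. (cmod (y j))\<^sup>2)"
proof -
  define p where "p j = cmod (y j)" for j
  have zero: "g i j = 0" if "i < 4" "j < 4" "\<not> (i = j + 1 \<or> j = i + 1)" for i j
    using g[OF that(1,2)] that(3) by simp
  have one: "cmod (g i j) \<le> 1" if "i < 4" "j < 4" for i j
    using g[OF that] by (auto split: if_splits)
  have row: "(\<Sum>j<4. g i j * y j) = g i 0 * y 0 + g i 1 * y 1 + g i 2 * y 2 + g i 3 * y 3" for i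
    by (simp add: eval_nat_numeral)
  have sum4: "(\<Sum>i<4. f i) = f 0 + f 1 + f 2 + f (3::nat)" for f :: "nat \<Rightarrow> real"
    by (simp add: eval_nat_numeral)
  have row2: "cmod (g i j * y j + g i k * y k) \<le> p j + p k" if "i < 4" "j < 4" "k < 4" for i j k
    using norm_triangle_ineq[of "g i j * y j" "g i k * y k"] norm_mult_le[OF one[OF that(1,2)], of "y j"]
      norm_mult_le[OF one[OF that(1,3)], of "y k"] unfolding p_def by linarith
  have r0: "(cmod (\<Sum>j<4. g 0 j * y j))\<^sup>2 \<le> (p 1)\<^sup>2"
    unfolding row p_def using zero[of 0 0] zero[of 0 2] zero[of 0 3] norm_mult_le[OF one[of 0 1]]
    by (simp add: power_mono)
  have r1: "(cmod (\<Sum>j<4. g 1 j * y j))\<^sup>2 \<le> (p 0 + p 2)\<^sup>2"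
    unfolding row using zero[of 1 1] zero[of 1 3] row2[of 1 0 2] by (simp add: power_mono)
  have r2: "(cmod (\<Sum>j<4. g 2 j * y j))\<^sup>2 \<le> (p 1 + p 3)\<^sup>2"
    unfolding row using zero[of 2 0] zero[of 2 2] row2[of 2 1 3] by (simp add: power_mono)
  have r3: "(cmod (\<Sum>j<4. g 3 j * y j))\<^sup>2 \<le> (p 2)\<^sup>2"
    unfolding row p_def using zero[of 3 0] zero[of 3 1] zero[of 3 3] norm_mult_le[OF one[of 3 2]]
    by (simp add: power_mono)
  have sos: "p1\<^sup>2 + (p0 + p2)\<^sup>2 + (p1 + p3)\<^sup>2 + p2\<^sup>2
      + ((p0 - p2)\<^sup>2 + (p1 - p3)\<^sup>2 + p0\<^sup>2 + p3\<^sup>2) = 3 * (p0\<^sup>2 + p1\<^sup>2 + p2\<^sup>2 + p3\<^sup>2)"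
    for p0 p1 p2 p3 :: real
    by (simp add: power2_eq_square algebra_simps)
  have "0 < (p 0 - p 2)\<^sup>2 + (p 1 - p 3)\<^sup>2 + (p 0)\<^sup>2 + (p 3)\<^sup>2"
  proof (rule ccontr)
    assume "\<not> ?thesis"
    moreover have "0 \<le> (p 0 - p 2)\<^sup>2" "0 \<le> (p 1 - p 3)\<^sup>2" "0 \<le> (p 0)\<^sup>2" "0 \<le> (p 3)\<^sup>2"
      by simp_all
    ultimately have "(p 0 - p 2)\<^sup>2 = 0" "(p 1 - p 3)\<^sup>2 = 0" "(p 0)\<^sup>2 = 0" "(p 3)\<^sup>2 = 0"
      by linarith+
    hence "y j = 0" if "j < 4" for j
      using that by (auto simp: p_def eval_nat_numeral less_Suc_eq)
    thus False
      using \<open>\<exists>j<4. y j \<noteq> 0\<close> by blast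
  qed
  thus ?thesis
    unfolding sum4 using r0 r1 r2 r3 sos[of "p 1" "p 0" "p 2" "p 3"] unfolding p_def by linarith
qed

lemma sum_atLeastAtMost_pad:
  assumes "k < (n::nat)"
  shows "(\<Sum>i\<in>{0..k}. f i) = (\<Sum>i<n. if i \<le> k then f i else (0::'a::comm_monoid_add))"
proof -
  have "{..<n} \<inter> {i. i \<le> k} = {0..k}"
    using assms by auto
  thus ?thesis
    using sum.inter_restrict[of "{..<n}" f "{i. i \<le> k}"] by simp
qed

lemma herm_sqnorm_on_path:
  fixes A :: "('n::finite \<times> 'n) set"
  assumes "k \<le> 3" and "und_iso_path A C k" and "\<exists>u\<in>C. v $ u \<noteq> 0"
  shows "herm_sqnorm_on A C v < 3 * sqnorm_on C v"
proof -
  obtain f where bij: "bij_betw f {0..k} C"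
    and adj: "\<forall>i\<in>{0..k}. \<forall>j\<in>{0..k}. und A (f i) (f j) \<longleftrightarrow> (i = j + 1 \<or> j = i + 1)"
    using assms(2) unfolding und_iso_path_def by blast
  have pad: "(\<Sum>i\<in>{0..k}. f i) = (\<Sum>i<4. if i \<le> k then f i else 0)" for f :: "nat \<Rightarrow> 'a::comm_monoid_add"
    by (rule sum_atLeastAtMost_pad) (use \<open>k \<le> 3\<close> in simp)
  define g where "g i j = (if i \<le> k \<and> j \<le> k then hentry A (f i) (f j) else 0)" for i j
  define y where "y j = (if j \<le> k then v $ f j else 0)" for j
  have row: "(\<Sum>j<4. if j \<le> k then hentry A (f i) (f j) * v $ f j else 0) = (\<Sum>j<4. g i j * y j)"
    if "i \<le> k" for i
    using that by (intro sum.cong) (auto simp: g_def y_def)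
  have "(\<Sum>j<4. g i j * y j) = 0" if "\<not> i \<le> k" for i
    using that by (simp add: g_def)
  hence "herm_sqnorm_on A C v = (\<Sum>i<4. (cmod (\<Sum>j<4. g i j * y j))\<^sup>2)"
    unfolding herm_sqnorm_on_def sum.reindex_bij_betw[OF bij, symmetric] pad
    by (intro sum.cong) (auto simp: row)
  moreover have "sqnorm_on C v = (\<Sum>j<4. (cmod (y j))\<^sup>2)"
    unfolding sqnorm_on_def sum.reindex_bij_betw[OF bij, symmetric] pad
    by (intro sum.cong) (auto simp: y_def)
  moreover have "cmod (g i j) \<le> (if i = j + 1 \<or> j = i + 1 then 1 else 0)" for i j
  proof (cases "i \<le> k \<and> j \<le> k")
    case True
    hence "und A (f i) (f j) \<longleftrightarrow> i = j + 1 \<or> j = i + 1"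
      using adj by auto
    thus ?thesis
      using True by (simp add: g_def norm_hentry)
  next
    case False
    hence "g i j = 0"
      by (auto simp: g_def)
    thus ?thesis
      by simp
  qed
  moreover have "\<exists>j<4. y j \<noteq> 0"
  proof -
    obtain u where "u \<in> C" "v $ u \<noteq> 0"
      using assms(3) by blast
    then obtain j where "j \<le> k" "u = f j"
      using bij_betw_imp_surj_on[OF bij] by auto
    thus ?thesis
      using \<open>v $ u \<noteq> 0\<close> \<open>k \<le> 3\<close> by (intro exI[of _ j]) (simp add: y_def)
  qed
  ultimately show ?thesis
    using path4_sq_bound[of g y] by simp
qed

definition c4_frame :: "('a \<times> 'a) set \<Rightarrow> 'a \<Rightarrow> 'a \<Rightarrow> 'a \<Rightarrow> 'a \<Rightarrow> bool" where
  "c4_frame A v0 v1 v2 v3 \<longleftrightarrow> distinct [v0, v1, v2, v3] \<and>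
     und A v0 v1 \<and> und A v1 v2 \<and> und A v2 v3 \<and> und A v3 v0 \<and> \<not> und A v0 v2 \<and> \<not> und A v1 v3"

definition cycle_gain :: "('n::finite \<times> 'n) set \<Rightarrow> 'n \<Rightarrow> 'n \<Rightarrow> 'n \<Rightarrow> 'n \<Rightarrow> complex" where
  "cycle_gain A v0 v1 v2 v3 = hentry A v0 v1 * hentry A v1 v2 * hentry A v2 v3 * hentry A v3 v0"

lemma c4_frame_rotate: "c4_frame A v0 v1 v2 v3 \<Longrightarrow> c4_frame A v1 v2 v3 v0"
  unfolding c4_frame_def using und_commute[of A v0 v2] by auto

lemma c4_frame_reverse: "c4_frame A v0 v1 v2 v3 \<Longrightarrow> c4_frame A v3 v2 v1 v0"
  unfolding c4_frame_def
  using und_commute[of A v0 v1] und_commute[of A v1 v2] und_commute[of A v2 v3]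
    und_commute[of A v3 v0] und_commute[of A v0 v2] und_commute[of A v1 v3]
  by auto

lemma cycle_gain_reverse: "cycle_gain A v3 v2 v1 v0 = cnj (cycle_gain A v0 v1 v2 v3)"
  by (simp add: cycle_gain_def cnj_hentry mult_ac)

lemma cycle_gain_cases:
  assumes "c4_frame A v0 v1 v2 v3"
  shows "cycle_gain A v0 v1 v2 v3 \<in> {1, -1, \<i>, - \<i>}"
proof -
  have mult: "x * y \<in> {1, -1, \<i>, - \<i>}" if "x \<in> {1, -1, \<i>, - \<i>}" "y \<in> {1, -1, \<i>, - \<i>}"
    for x y :: complex
    using that by auto
  have entry: "hentry A a b \<in> {1, -1, \<i>, - \<i>}" if "und A a b" for a b
    using hentry_cases[OF that] by auto
  show ?thesis
    unfolding cycle_gain_def using assms by (intro mult entry) (simp_all add: c4_frame_def)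
qed

lemma norm_add_sq_complex: "(cmod (u + v))\<^sup>2 = (cmod u)\<^sup>2 + (cmod v)\<^sup>2 + 2 * Re (cnj u * v)"
  unfolding cmod_power2 by (simp add: power2_eq_square algebra_simps)

lemma norm_sq_two_rows:
  "(cmod (a * x + b * y))\<^sup>2 + (cmod (c * x + d * y))\<^sup>2 =
   ((cmod a)\<^sup>2 + (cmod c)\<^sup>2) * (cmod x)\<^sup>2 + ((cmod b)\<^sup>2 + (cmod d)\<^sup>2) * (cmod y)\<^sup>2
   + 2 * Re (cnj x * y * (cnj a * b + cnj c * d))"
proof -
  have "cnj (a1 * a2) * (a3 * a4) = cnj a2 * a4 * (cnj a1 * a3)" for a1 a2 a3 a4 :: complex
    by (simp add: algebra_simps)
  thus ?thesis
    unfolding norm_add_sq_complex distrib_left plus_complex.sel(1) norm_mult power_mult_distrib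
    by (simp add: algebra_simps)
qed

text \<open>Gain \<open>-1\<close> makes the rows of \<open>H\<close> through two opposite vertices orthogonal, so that \<open>H\<^sup>2 = 2 I\<close>
  on the cycle.\<close>

lemma herm_sqnorm_on_c4_gain:
  fixes A :: "('n::finite \<times> 'n) set"
  assumes irr: "\<forall>x. (x,x) \<notin> A" and fr: "c4_frame A v0 v1 v2 v3"
    and gain: "cycle_gain A v0 v1 v2 v3 = -1"
  shows "herm_sqnorm_on A {v0,v1,v2,v3} v = 2 * sqnorm_on {v0,v1,v2,v3} v"
proof -
  have d: "v0 \<noteq> v1" "v0 \<noteq> v2" "v0 \<noteq> v3" "v1 \<noteq> v2" "v1 \<noteq> v3" "v2 \<noteq> v3"
    using fr by (auto simp: c4_frame_def)
  have U: "und A v0 v1" "und A v1 v2" "und A v2 v3" "und A v3 v0"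
    using fr by (auto simp: c4_frame_def)
  have zero: "hentry A x x = 0" "hentry A v0 v2 = 0" "hentry A v2 v0 = 0"
    "hentry A v1 v3 = 0" "hentry A v3 v1 = 0" for x
    using fr irr by (auto simp: c4_frame_def hentry_eq_0_iff und_commute und_def)
  have one: "cmod (hentry A a b) = 1" if "und A a b \<or> und A b a" for a b
    using that by (auto simp: norm_hentry und_commute)
  have nz: "hentry A a b \<noteq> 0" if "und A a b" for a b
    using that by (simp add: hentry_eq_0_iff)
  let ?h01 = "hentry A v0 v1" and ?h10 = "hentry A v1 v0" and ?h12 = "hentry A v1 v2"
  let ?h21 = "hentry A v2 v1" and ?h23 = "hentry A v2 v3" and ?h32 = "hentry A v3 v2"
  let ?h30 = "hentry A v3 v0" and ?h03 = "hentry A v0 v3"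
  have "?h01 * ?h30 * (?h10 * ?h03 + ?h12 * ?h23)
      = (?h01 * ?h10) * (?h30 * ?h03) + cycle_gain A v0 v1 v2 v3"
    by (simp add: cycle_gain_def algebra_simps)
  hence orth1: "?h10 * ?h03 + ?h12 * ?h23 = 0"
    using gain hentry_mult_commute[OF U(1)] hentry_mult_commute[OF U(4)] nz[OF U(1)] nz[OF U(4)]
    by simp
  have "?h23 * ?h30 * (?h01 * ?h12 + ?h03 * ?h32)
      = cycle_gain A v0 v1 v2 v3 + (?h23 * ?h32) * (?h30 * ?h03)"
    by (simp add: cycle_gain_def algebra_simps)
  hence orth2: "?h01 * ?h12 + ?h03 * ?h32 = 0"
    using gain hentry_mult_commute[OF U(3)] hentry_mult_commute[OF U(4)] nz[OF U(3)] nz[OF U(4)]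
    by simp
  have rows13: "(cmod (?h01 * v$v1 + ?h03 * v$v3))\<^sup>2 + (cmod (?h21 * v$v1 + ?h23 * v$v3))\<^sup>2
      = 2 * (cmod (v$v1))\<^sup>2 + 2 * (cmod (v$v3))\<^sup>2"
    unfolding norm_sq_two_rows cnj_hentry using orth1 one U by simp
  have rows02: "(cmod (?h10 * v$v0 + ?h12 * v$v2))\<^sup>2 + (cmod (?h30 * v$v0 + ?h32 * v$v2))\<^sup>2
      = 2 * (cmod (v$v0))\<^sup>2 + 2 * (cmod (v$v2))\<^sup>2"
    unfolding norm_sq_two_rows cnj_hentry using orth2 one U by simp
  have sum4: "(\<Sum>u\<in>{v0,v1,v2,v3}. f u) = f v0 + f v1 + f v2 + f v3" for f :: "'n \<Rightarrow> 'b::comm_monoid_add"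
    using d by (simp add: add.assoc)
  show ?thesis
    unfolding herm_sqnorm_on_def sqnorm_on_def sum4 using rows13 rows02 by (simp add: zero algebra_simps)
qed

lemma herm_sqnorm_on_c4:
  fixes A :: "('n::finite \<times> 'n) set"
  assumes "\<forall>x. (x,x) \<notin> A" and "c4_frame A v0 v1 v2 v3" and "cycle_gain A v0 v1 v2 v3 = -1"
    and C: "C = {v0,v1,v2,v3}" and "\<exists>u\<in>C. v $ u \<noteq> 0"
  shows "herm_sqnorm_on A C v < 3 * sqnorm_on C v"
proof -
  have "0 < sqnorm_on C v"
    using assms(5) sqnorm_on_pos[of C] C by blast
  thus ?thesis
    using herm_sqnorm_on_c4_gain[OF assms(1-3)] C by simp
qed

lemma iso_tilde_C4I:
  assumes "distinct [a, b, c, d]" and C: "C = {a, b, c, d}"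
    and "(a,b) \<in> A" "(b,c) \<in> A" "(c,d) \<in> A" "(a,d) \<in> A"
    and "(b,a) \<notin> A" "(c,b) \<notin> A" "(d,c) \<notin> A" "(d,a) \<notin> A"
      "(a,c) \<notin> A" "(c,a) \<notin> A" "(b,d) \<notin> A" "(d,b) \<notin> A"
    and "\<forall>x. (x,x) \<notin> A"
  shows "iso_tilde_C4 A C"
  unfolding iso_tilde_C4_def
proof (intro exI conjI)
  let ?v = "[a, b, c, d]"
  show "bij_betw ((!) ?v) {0..<4} C"
    by (rule bij_betw_nth) (use assms(1) C in auto)
  have "{0..<4::nat} = {0, 1, 2, 3}"
    by auto
  thus "\<forall>i\<in>{0..<4}. \<forall>j\<in>{0..<4}. (?v ! i, ?v ! j) \<in> A \<longleftrightarrow> (i, j) \<in> {(0,1), (1,2), (2,3), (0,3)}"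
    using assms(3-) by (simp add: eval_nat_numeral)
qed

lemma strongly_connected_on_cycleI:
  assumes C: "C = {p0, p1, p2, p3}"
    and "(p0,p1) \<in> A" "(p1,p2) \<in> A" "(p2,p3) \<in> A" "(p3,p0) \<in> A"
  shows "strongly_connected_on A C"
proof -
  let ?R = "(A \<inter> C \<times> C)\<^sup>*"
  have steps: "(p0,p1) \<in> ?R" "(p1,p2) \<in> ?R" "(p2,p3) \<in> ?R" "(p3,p0) \<in> ?R"
    using assms by auto
  have "(x, p0) \<in> ?R" "(p0, x) \<in> ?R" if "x \<in> C" for x
    using that C steps by (auto intro: rtrancl_trans)
  thus ?thesis
    unfolding strongly_connected_on_def by (blast intro: rtrancl_trans)
qed

lemma strongly_connected_on_exit_arc:
  assumes sc: "strongly_connected_on A C" and "S \<subseteq> C" "x \<in> S" "y \<in> C" "y \<notin> S"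
  obtains a b where "a \<in> S" "b \<in> C" "b \<notin> S" "(a,b) \<in> A"
proof (rule ccontr)
  assume no_exit: "\<not> thesis"
  have "(x,y) \<in> (A \<inter> C \<times> C)\<^sup>*"
    using sc assms(2-4) unfolding strongly_connected_on_def by blast
  hence "y \<in> S"
  proof (induction rule: rtrancl_induct)
    case (step z w)
    thus ?case
      using no_exit that by blast
  qed (rule \<open>x \<in> S\<close>)
  thus False
    using \<open>y \<notin> S\<close> by contradiction
qed

lemma digons_on_c4_frame:
  assumes irr: "\<forall>x. (x,x) \<notin> A" and fr: "c4_frame A v0 v1 v2 v3"
  shows "digons_on A {v0,v1,v2,v3} =
     (if (v0,v1) \<in> A \<and> (v1,v0) \<in> A then {{v0,v1}} else {}) \<union>
     (if (v1,v2) \<in> A \<and> (v2,v1) \<in> A then {{v1,v2}} else {}) \<union>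
     (if (v2,v3) \<in> A \<and> (v3,v2) \<in> A then {{v2,v3}} else {}) \<union>
     (if (v3,v0) \<in> A \<and> (v0,v3) \<in> A then {{v3,v0}} else {})" (is "?L = ?R")
proof
  have chords: "(v0,v2) \<notin> A" "(v2,v0) \<notin> A" "(v1,v3) \<notin> A" "(v3,v1) \<notin> A"
    using fr by (auto simp: c4_frame_def und_def)
  show "?L \<subseteq> ?R"
  proof
    fix e
    assume "e \<in> ?L"
    then obtain x y where "e = {x,y}" and "x \<in> {v0,v1,v2,v3}" "y \<in> {v0,v1,v2,v3}"
      and "(x,y) \<in> A" "(y,x) \<in> A"
      unfolding digons_on_def by blast
    moreover have "x = v0 \<or> x = v1 \<or> x = v2 \<or> x = v3" "y = v0 \<or> y = v1 \<or> y = v2 \<or> y = v3"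
      using \<open>x \<in> {v0,v1,v2,v3}\<close> \<open>y \<in> {v0,v1,v2,v3}\<close> by simp_all
    ultimately show "e \<in> ?R"
      using chords irr by (elim disjE) (simp_all add: insert_commute)
  qed
  show "?R \<subseteq> ?L"
    unfolding digons_on_def by (auto split: if_splits)
qed

lemma card_digons_on_c4_frame:
  assumes irr: "\<forall>x. (x,x) \<notin> A" and fr: "c4_frame A v0 v1 v2 v3"
  shows "card (digons_on A {v0,v1,v2,v3}) =
     of_bool ((v0,v1) \<in> A \<and> (v1,v0) \<in> A) + of_bool ((v1,v2) \<in> A \<and> (v2,v1) \<in> A) +
     of_bool ((v2,v3) \<in> A \<and> (v3,v2) \<in> A) + of_bool ((v3,v0) \<in> A \<and> (v0,v3) \<in> A)"
proof -
  have d: "{v0,v1} \<noteq> {v1,v2}" "{v0,v1} \<noteq> {v2,v3}" "{v0,v1} \<noteq> {v3,v0}"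
    "{v1,v2} \<noteq> {v2,v3}" "{v1,v2} \<noteq> {v3,v0}" "{v2,v3} \<noteq> {v3,v0}"
    using fr by (auto simp: c4_frame_def doubleton_eq_iff)
  have "card ((if P1 then {{v0,v1}} else {}) \<union> (if P2 then {{v1,v2}} else {}) \<union>
      (if P3 then {{v2,v3}} else {}) \<union> (if P4 then {{v3,v0}} else {}))
      = of_bool P1 + of_bool P2 + of_bool P3 + of_bool P4" for P1 P2 P3 P4
    by (cases P1; cases P2; cases P3; cases P4) (simp_all add: d d[symmetric] card_insert_if)
  thus ?thesis
    unfolding digons_on_c4_frame[OF assms] .
qed

text \<open>Leaving \<open>{v\<^sub>1}\<close>, \<open>{v\<^sub>1, v\<^sub>2}\<close> and \<open>{v\<^sub>1, v\<^sub>2, v\<^sub>3}\<close> forces the arcs \<open>v\<^sub>1v\<^sub>2\<close>, \<open>v\<^sub>2v\<^sub>3\<close>, \<open>v\<^sub>3v\<^sub>0\<close>;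
  as two of the three are digons, the gain is \<open>\<i> \<cdot> \<i> \<cdot> 1 \<cdot> 1 = -1\<close>.\<close>

lemma c4_gain_if_strongly_connected_oriented:
  assumes irr: "\<forall>x. (x,x) \<notin> A" and fr: "c4_frame A v0 v1 v2 v3"
    and arc: "(v0,v1) \<in> A" "(v1,v0) \<notin> A"
    and sc: "strongly_connected_on A {v0,v1,v2,v3}"
    and two: "card (digons_on A {v0,v1,v2,v3}) = 2"
  shows "cycle_gain A v0 v1 v2 v3 = -1"
proof -
  have d: "distinct [v0,v1,v2,v3]"
    using fr by (simp add: c4_frame_def)
  have chords: "(v0,v2) \<notin> A" "(v2,v0) \<notin> A" "(v1,v3) \<notin> A" "(v3,v1) \<notin> A"
    using fr by (auto simp: c4_frame_def und_def)
  obtain a b where "a \<in> {v1,v2,v3}" "b \<in> {v0,v1,v2,v3}" "b \<notin> {v1,v2,v3}" "(a,b) \<in> A"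
    by (rule strongly_connected_on_exit_arc[OF sc, of "{v1,v2,v3}" v1 v0]) (use d in auto)
  hence a30: "(v3,v0) \<in> A"
    using arc chords by auto
  obtain a b where "a \<in> {v1,v2}" "b \<in> {v0,v1,v2,v3}" "b \<notin> {v1,v2}" "(a,b) \<in> A"
    by (rule strongly_connected_on_exit_arc[OF sc, of "{v1,v2}" v1 v0]) (use d in auto)
  hence a23: "(v2,v3) \<in> A"
    using arc chords by auto
  obtain b where "b \<in> {v0,v1,v2,v3}" "b \<noteq> v1" "(v1,b) \<in> A"
    by (rule strongly_connected_on_exit_arc[OF sc, of "{v1}" v1 v0]) (use d in auto)
  hence a12: "(v1,v2) \<in> A"
    using arc chords irr by auto
  let ?D12 = "(v2,v1) \<in> A" and ?D23 = "(v3,v2) \<in> A" and ?D30 = "(v0,v3) \<in> A"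
  have "of_bool ?D12 + of_bool ?D23 + of_bool ?D30 = (2::nat)"
    using two arc a12 a23 a30 unfolding card_digons_on_c4_frame[OF irr fr] by simp
  hence "(?D12 \<and> ?D23 \<and> \<not> ?D30) \<or> (?D12 \<and> \<not> ?D23 \<and> ?D30) \<or> (\<not> ?D12 \<and> ?D23 \<and> ?D30)"
    by (cases ?D12; cases ?D23; cases ?D30) simp_all
  thus ?thesis
    using arc a12 a23 a30 by (elim disjE) (simp_all add: cycle_gain_def hentry_eq)
qed

lemma i_mult_triple_eq_minus_1_cases:
  fixes x y z :: complex
  assumes "x \<in> {1, \<i>, - \<i>}" "y \<in> {1, \<i>, - \<i>}" "z \<in> {1, \<i>, - \<i>}" and "\<i> * (x * y * z) = -1"
  shows "(x = 1 \<and> y = 1 \<and> z = \<i>) \<or> (x = 1 \<and> y = \<i> \<and> z = 1) \<or> (x = \<i> \<and> y = 1 \<and> z = 1) \<or>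
    (x = \<i> \<and> y = \<i> \<and> z = - \<i>) \<or> (x = \<i> \<and> y = - \<i> \<and> z = \<i>) \<or> (x = - \<i> \<and> y = \<i> \<and> z = \<i>) \<or>
    (x = - \<i> \<and> y = - \<i> \<and> z = - \<i>)"
proof -
  have "x = 1 \<or> x = \<i> \<or> x = - \<i>" "y = 1 \<or> y = \<i> \<or> y = - \<i>" "z = 1 \<or> z = \<i> \<or> z = - \<i>"
    using assms(1-3) by simp_all
  thus ?thesis
    using assms(4) by (elim disjE) (simp_all add: complex_eq_iff)
qed

text \<open>With \<open>H\<^sub>0\<^sub>1 = \<i>\<close>, gain \<open>-1\<close> leaves seven choices for the other three entries: two digons and a
  forward arc, giving a strongly connected digraph, or no digon and an odd number of arcs against the
  cyclic order, which is \<open>C\<^sub>4\<close> with one arc reversed.\<close>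

lemma c4_tilde_or_strongly_connected_if_gain_oriented:
  assumes irr: "\<forall>x. (x,x) \<notin> A" and fr: "c4_frame A v0 v1 v2 v3"
    and arc: "(v0,v1) \<in> A" "(v1,v0) \<notin> A"
    and gain: "cycle_gain A v0 v1 v2 v3 = -1"
  shows "iso_tilde_C4 A {v0,v1,v2,v3} \<or>
     (strongly_connected_on A {v0,v1,v2,v3} \<and> card (digons_on A {v0,v1,v2,v3}) = 2)"
proof -
  have d: "distinct [v0,v1,v2,v3]"
    using fr by (simp add: c4_frame_def)
  have chords: "(v0,v2) \<notin> A" "(v2,v0) \<notin> A" "(v1,v3) \<notin> A" "(v3,v1) \<notin> A"
    using fr by (auto simp: c4_frame_def und_def)
  have "hentry A v0 v1 = \<i>"
    using arc by (simp add: hentry_eq_i_iff)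
  hence "\<i> * (hentry A v1 v2 * hentry A v2 v3 * hentry A v3 v0) = -1"
    using gain by (simp add: cycle_gain_def mult.assoc)
  hence cases: "(hentry A v1 v2 = 1 \<and> hentry A v2 v3 = 1 \<and> hentry A v3 v0 = \<i>) \<or>
      (hentry A v1 v2 = 1 \<and> hentry A v2 v3 = \<i> \<and> hentry A v3 v0 = 1) \<or>
      (hentry A v1 v2 = \<i> \<and> hentry A v2 v3 = 1 \<and> hentry A v3 v0 = 1) \<or>
      (hentry A v1 v2 = \<i> \<and> hentry A v2 v3 = \<i> \<and> hentry A v3 v0 = - \<i>) \<or>
      (hentry A v1 v2 = \<i> \<and> hentry A v2 v3 = - \<i> \<and> hentry A v3 v0 = \<i>) \<or>
      (hentry A v1 v2 = - \<i> \<and> hentry A v2 v3 = \<i> \<and> hentry A v3 v0 = \<i>) \<or>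
      (hentry A v1 v2 = - \<i> \<and> hentry A v2 v3 = - \<i> \<and> hentry A v3 v0 = - \<i>)"
    using fr by (intro i_mult_triple_eq_minus_1_cases hentry_cases) (auto simp: c4_frame_def)
  have sc: "strongly_connected_on A {v0,v1,v2,v3}"
    if "(v1,v2) \<in> A" "(v2,v3) \<in> A" "(v3,v0) \<in> A"
    by (rule strongly_connected_on_cycleI[OF refl arc(1) that])
  have card: "card (digons_on A {v0,v1,v2,v3}) = of_bool ((v1,v2) \<in> A \<and> (v2,v1) \<in> A) +
      of_bool ((v2,v3) \<in> A \<and> (v3,v2) \<in> A) + of_bool ((v3,v0) \<in> A \<and> (v0,v3) \<in> A)"
    using arc unfolding card_digons_on_c4_frame[OF irr fr] by simp
  have "{v0,v1,v2,v3} = {v3,v0,v1,v2}" "{v0,v1,v2,v3} = {v2,v3,v0,v1}"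
    "{v0,v1,v2,v3} = {v0,v3,v2,v1}"
    by auto
  note tilde = iso_tilde_C4I[OF _ this(1)] iso_tilde_C4I[OF _ this(2)] iso_tilde_C4I[OF _ this(3)]
    iso_tilde_C4I[where a=v0 and b=v1 and c=v2 and d=v3, OF _ refl]
  note arcs = hentry_eq_1_iff hentry_eq_i_iff hentry_eq_minus_i_iff
  from cases show ?thesis
  proof (elim disjE conjE)
    assume "hentry A v1 v2 = 1" "hentry A v2 v3 = 1" "hentry A v3 v0 = \<i>"
    thus ?thesis
      using sc card by (simp add: arcs)
  next
    assume "hentry A v1 v2 = 1" "hentry A v2 v3 = \<i>" "hentry A v3 v0 = 1"
    thus ?thesis
      using sc card by (simp add: arcs)
  next
    assume "hentry A v1 v2 = \<i>" "hentry A v2 v3 = 1" "hentry A v3 v0 = 1"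
    thus ?thesis
      using sc card by (simp add: arcs)
  next
    assume "hentry A v1 v2 = \<i>" "hentry A v2 v3 = \<i>" "hentry A v3 v0 = - \<i>"
    hence "iso_tilde_C4 A {v0,v1,v2,v3}"
      using d arc chords irr by (intro tilde(4)) (auto simp: arcs)
    thus ?thesis ..
  next
    assume "hentry A v1 v2 = \<i>" "hentry A v2 v3 = - \<i>" "hentry A v3 v0 = \<i>"
    hence "iso_tilde_C4 A {v0,v1,v2,v3}"
      using d arc chords irr by (intro tilde(1)) (auto simp: arcs)
    thus ?thesis ..
  next
    assume "hentry A v1 v2 = - \<i>" "hentry A v2 v3 = \<i>" "hentry A v3 v0 = \<i>"
    hence "iso_tilde_C4 A {v0,v1,v2,v3}"
      using d arc chords irr by (intro tilde(2)) (auto simp: arcs)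
    thus ?thesis ..
  next
    assume "hentry A v1 v2 = - \<i>" "hentry A v2 v3 = - \<i>" "hentry A v3 v0 = - \<i>"
    hence "iso_tilde_C4 A {v0,v1,v2,v3}"
      using d arc chords irr by (intro tilde(3)) (auto simp: arcs)
    thus ?thesis ..
  qed
qed

lemma cycle_gain_reverse_eq_minus_1_iff:
  "cycle_gain A v3 v2 v1 v0 = -1 \<longleftrightarrow> cycle_gain A v0 v1 v2 v3 = -1"
  using cycle_gain_reverse[of A v3 v2 v1 v0] by (simp add: complex_eq_iff)

lemma c4_frame_orient:
  assumes fr: "c4_frame A v0 v1 v2 v3"
    and not_digons: "\<not> (hentry A v0 v1 = 1 \<and> hentry A v1 v2 = 1 \<and> hentry A v2 v3 = 1 \<and> hentry A v3 v0 = 1)"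
  obtains a b c d where "c4_frame A a b c d" "{a,b,c,d} = {v0,v1,v2,v3}"
    "cycle_gain A a b c d = -1 \<longleftrightarrow> cycle_gain A v0 v1 v2 v3 = -1" "(a,b) \<in> A" "(b,a) \<notin> A"
proof -
  have f1: "c4_frame A v1 v2 v3 v0"
    using c4_frame_rotate[OF fr] .
  have f2: "c4_frame A v2 v3 v0 v1"
    using c4_frame_rotate[OF f1] .
  have f3: "c4_frame A v3 v0 v1 v2"
    using c4_frame_rotate[OF f2] .
  have g1: "cycle_gain A v1 v2 v3 v0 = cycle_gain A v0 v1 v2 v3"
    and g2: "cycle_gain A v2 v3 v0 v1 = cycle_gain A v0 v1 v2 v3"
    and g3: "cycle_gain A v3 v0 v1 v2 = cycle_gain A v0 v1 v2 v3"
    by (simp_all add: cycle_gain_def mult_ac)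
  note reverse = c4_frame_reverse cycle_gain_reverse_eq_minus_1_iff
  have "und A v0 v1" "und A v1 v2" "und A v2 v3" "und A v3 v0"
    using fr by (simp_all add: c4_frame_def)
  hence "((v0,v1) \<in> A \<and> (v1,v0) \<notin> A) \<or> ((v1,v0) \<in> A \<and> (v0,v1) \<notin> A) \<or>
      ((v1,v2) \<in> A \<and> (v2,v1) \<notin> A) \<or> ((v2,v1) \<in> A \<and> (v1,v2) \<notin> A) \<or>
      ((v2,v3) \<in> A \<and> (v3,v2) \<notin> A) \<or> ((v3,v2) \<in> A \<and> (v2,v3) \<notin> A) \<or>
      ((v3,v0) \<in> A \<and> (v0,v3) \<notin> A) \<or> ((v0,v3) \<in> A \<and> (v3,v0) \<notin> A)"
    using not_digons unfolding und_def hentry_eq_1_iff by blast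
  thus ?thesis
  proof (elim disjE conjE)
    assume "(v0,v1) \<in> A" "(v1,v0) \<notin> A"
    thus ?thesis
      by (rule that[OF fr refl refl])
  next
    assume "(v1,v0) \<in> A" "(v0,v1) \<notin> A"
    moreover have "{v1,v0,v3,v2} = {v0,v1,v2,v3}"
      by auto
    ultimately show ?thesis
      using reverse(2)[of A v2 v3 v0 v1] g2 by (intro that[OF reverse(1)[OF f2]]) simp_all
  next
    assume "(v1,v2) \<in> A" "(v2,v1) \<notin> A"
    moreover have "{v1,v2,v3,v0} = {v0,v1,v2,v3}"
      by auto
    ultimately show ?thesis
      using g1 by (intro that[OF f1]) simp_all
  next
    assume "(v2,v1) \<in> A" "(v1,v2) \<notin> A"
    moreover have "{v2,v1,v0,v3} = {v0,v1,v2,v3}"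
      by auto
    ultimately show ?thesis
      using reverse(2)[of A v3 v0 v1 v2] g3 by (intro that[OF reverse(1)[OF f3]]) simp_all
  next
    assume "(v2,v3) \<in> A" "(v3,v2) \<notin> A"
    moreover have "{v2,v3,v0,v1} = {v0,v1,v2,v3}"
      by auto
    ultimately show ?thesis
      using g2 by (intro that[OF f2]) simp_all
  next
    assume "(v3,v2) \<in> A" "(v2,v3) \<notin> A"
    moreover have "{v3,v2,v1,v0} = {v0,v1,v2,v3}"
      by auto
    ultimately show ?thesis
      using reverse(2)[of A v0 v1 v2 v3] by (intro that[OF reverse(1)[OF fr]]) simp_all
  next
    assume "(v3,v0) \<in> A" "(v0,v3) \<notin> A"
    moreover have "{v3,v0,v1,v2} = {v0,v1,v2,v3}"
      by auto
    ultimately show ?thesis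
      using g3 by (intro that[OF f3]) simp_all
  next
    assume "(v0,v3) \<in> A" "(v3,v0) \<notin> A"
    moreover have "{v0,v3,v2,v1} = {v0,v1,v2,v3}"
      by auto
    ultimately show ?thesis
      using reverse(2)[of A v1 v2 v3 v0] g1 by (intro that[OF reverse(1)[OF f1]]) simp_all
  qed
qed

lemma c4_gain_if_strongly_connected:
  assumes irr: "\<forall>x. (x,x) \<notin> A" and fr: "c4_frame A v0 v1 v2 v3"
    and sc: "strongly_connected_on A {v0,v1,v2,v3}"
    and two: "card (digons_on A {v0,v1,v2,v3}) = 2"
  shows "cycle_gain A v0 v1 v2 v3 = -1"
proof (cases "hentry A v0 v1 = 1 \<and> hentry A v1 v2 = 1 \<and> hentry A v2 v3 = 1 \<and> hentry A v3 v0 = 1")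
  case True
  hence "card (digons_on A {v0,v1,v2,v3}) = 4"
    unfolding card_digons_on_c4_frame[OF irr fr] by (simp add: hentry_eq_1_iff)
  thus ?thesis
    using two by simp
next
  case False
  then obtain a b c d where "c4_frame A a b c d" and C: "{a,b,c,d} = {v0,v1,v2,v3}"
    and "cycle_gain A a b c d = -1 \<longleftrightarrow> cycle_gain A v0 v1 v2 v3 = -1" "(a,b) \<in> A" "(b,a) \<notin> A"
    using c4_frame_orient[OF fr] by blast
  thus ?thesis
    using c4_gain_if_strongly_connected_oriented[OF irr] sc two unfolding C[symmetric] by blast
qed

lemma c4_tilde_or_strongly_connected_if_gain:
  assumes irr: "\<forall>x. (x,x) \<notin> A" and fr: "c4_frame A v0 v1 v2 v3"
    and gain: "cycle_gain A v0 v1 v2 v3 = -1"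
  shows "iso_tilde_C4 A {v0,v1,v2,v3} \<or>
     (strongly_connected_on A {v0,v1,v2,v3} \<and> card (digons_on A {v0,v1,v2,v3}) = 2)"
proof (cases "hentry A v0 v1 = 1 \<and> hentry A v1 v2 = 1 \<and> hentry A v2 v3 = 1 \<and> hentry A v3 v0 = 1")
  case True
  hence "cycle_gain A v0 v1 v2 v3 = 1"
    by (simp add: cycle_gain_def)
  thus ?thesis
    using gain by simp
next
  case False
  then obtain a b c d where "c4_frame A a b c d" and C: "{a,b,c,d} = {v0,v1,v2,v3}"
    and "cycle_gain A a b c d = -1 \<longleftrightarrow> cycle_gain A v0 v1 v2 v3 = -1" "(a,b) \<in> A" "(b,a) \<notin> A"
    using c4_frame_orient[OF fr] by blast
  thus ?thesis
    using c4_tilde_or_strongly_connected_if_gain_oriented[OF irr] gain unfolding C[symmetric] by blast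
qed

lemma bij_betw_4:
  assumes "bij_betw f {0..<4::nat} C"
  shows "C = {f 0, f 1, f 2, f 3}" "distinct [f 0, f 1, f 2, f 3]"
proof -
  have four: "{0..<4::nat} = {0, 1, 2, 3}"
    by auto
  show "C = {f 0, f 1, f 2, f 3}"
    using bij_betw_imp_surj_on[OF assms] by (auto simp: four)
  have "inj_on f {0, 1, 2, 3}"
    using bij_betw_imp_inj_on[OF assms] by (simp add: four)
  thus "distinct [f 0, f 1, f 2, f 3]"
    by (auto simp: inj_on_def)
qed

lemma c4_frame_if_und_iso_C4:
  assumes "und_iso_C4 A C"
  obtains v0 v1 v2 v3 where "c4_frame A v0 v1 v2 v3" "C = {v0,v1,v2,v3}"
proof -
  obtain f where bij: "bij_betw f {0..<4} C"
    and adj: "\<forall>i\<in>{0..<4}. \<forall>j\<in>{0..<4::nat}. und A (f i) (f j) \<longleftrightarrow> j = (i + 1) mod 4 \<or> i = (j + 1) mod 4"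
    using assms unfolding und_iso_C4_def by blast
  have "c4_frame A (f 0) (f 1) (f 2) (f 3)"
    unfolding c4_frame_def using bij_betw_4(2)[OF bij] adj by simp
  thus ?thesis
    using that bij_betw_4(1)[OF bij] by blast
qed

lemma c4_frame_if_iso_tilde_C4:
  assumes "iso_tilde_C4 A C"
  obtains v0 v1 v2 v3 where "c4_frame A v0 v1 v2 v3" "C = {v0,v1,v2,v3}"
    "cycle_gain A v0 v1 v2 v3 = -1"
proof -
  obtain f where bij: "bij_betw f {0..<4} C"
    and arcs: "\<forall>i\<in>{0..<4}. \<forall>j\<in>{0..<4}. (f i, f j) \<in> A \<longleftrightarrow> (i, j) \<in> {(0::nat,1::nat), (1,2), (2,3), (0,3)}"
    using assms unfolding iso_tilde_C4_def by blast
  have "c4_frame A (f 0) (f 1) (f 2) (f 3)"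
    unfolding c4_frame_def und_def using bij_betw_4(2)[OF bij] arcs by simp
  moreover have "cycle_gain A (f 0) (f 1) (f 2) (f 3) = -1"
    unfolding cycle_gain_def hentry_eq using arcs by simp
  ultimately show ?thesis
    using that bij_betw_4(1)[OF bij] by blast
qed

definition admissible_component :: "('n \<times> 'n) set \<Rightarrow> 'n set \<Rightarrow> bool" where
  "admissible_component A C \<longleftrightarrow> (\<exists>k \<le> 3. und_iso_path A C k)
      \<or> (und_iso_C4 A C \<and> (iso_tilde_C4 A C \<or> (strongly_connected_on A C \<and> card (digons_on A C) = 2)))"

lemma herm_sqnorm_on_admissible:
  fixes A :: "('n::finite \<times> 'n) set"
  assumes irr: "\<forall>x. (x,x) \<notin> A" and "admissible_component A C" and nz: "\<exists>u\<in>C. v $ u \<noteq> 0"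
  shows "herm_sqnorm_on A C v < 3 * sqnorm_on C v"
  using assms(2) unfolding admissible_component_def
proof (elim disjE conjE exE)
  fix k
  assume "k \<le> 3" "und_iso_path A C k"
  thus ?thesis
    using herm_sqnorm_on_path nz by blast
next
  assume "iso_tilde_C4 A C"
  then obtain v0 v1 v2 v3 where "c4_frame A v0 v1 v2 v3" "C = {v0,v1,v2,v3}"
    "cycle_gain A v0 v1 v2 v3 = -1"
    by (rule c4_frame_if_iso_tilde_C4)
  thus ?thesis
    using herm_sqnorm_on_c4[OF irr] nz by blast
next
  assume "und_iso_C4 A C" "strongly_connected_on A C" "card (digons_on A C) = 2"
  moreover obtain v0 v1 v2 v3 where "c4_frame A v0 v1 v2 v3" "C = {v0,v1,v2,v3}"
    using c4_frame_if_und_iso_C4[OF \<open>und_iso_C4 A C\<close>] by blast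
  ultimately show ?thesis
    using herm_sqnorm_on_c4[OF irr] c4_gain_if_strongly_connected[OF irr] nz by blast
qed

section \<open>Test vectors\<close>

definition neighbours :: "('a \<times> 'a) set \<Rightarrow> 'a \<Rightarrow> 'a set" where
  "neighbours A u = {v. und A u v}"

lemma mem_neighbours_iff: "v \<in> neighbours A u \<longleftrightarrow> und A u v"
  by (simp add: neighbours_def)

lemma neighbours_commute: "v \<in> neighbours A u \<longleftrightarrow> u \<in> neighbours A v"
  by (simp add: neighbours_def und_commute)

lemma sum_norm_hentry_sq:
  "(\<Sum>u\<in>UNIV. (cmod (hentry A u b))\<^sup>2) = real (card (neighbours A (b::'n::finite)))"
proof -
  have "(\<Sum>u\<in>UNIV. (cmod (hentry A u b))\<^sup>2) = (\<Sum>u\<in>UNIV. if u \<in> neighbours A b then 1 else 0)"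
    by (intro sum.cong refl) (simp add: norm_hentry neighbours_def und_commute)
  thus ?thesis
    by (simp add: sum.If_cases)
qed

lemma card_neighbours_le_2:
  fixes A :: "('n::finite \<times> 'n) set"
  assumes "norm_sq_bound (herm A) 3"
  shows "card (neighbours A u) \<le> 2"
proof -
  define w :: "complex^'n" where "w = axis u 1"
  have "(herm A *v w) $ x = hentry A x u" for x
    unfolding matrix_vector_mult_component w_def axis_def by (simp add: if_distrib cong: if_cong)
  hence "(norm (herm A *v w))\<^sup>2 = real (card (neighbours A u))"
    unfolding norm_vec_sq sum_norm_hentry_sq[symmetric] by simp
  moreover have "(norm w)\<^sup>2 = 1"
    by (simp add: w_def)
  moreover have "w \<noteq> 0"
    by (simp add: w_def axis_eq_0_iff)
  ultimately show ?thesis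
    using assms unfolding norm_sq_bound_def by fastforce
qed

lemma unimodular_rotation:
  obtains z :: complex where "cmod z = 1" "Re (z * S) = cmod S"
proof (cases "S = 0")
  case False
  define z where "z = cnj S / complex_of_real (cmod S)"
  have "z * S = (cnj S * S) / complex_of_real (cmod S)"
    by (simp add: z_def)
  also have "cnj S * S = complex_of_real ((cmod S)\<^sup>2)"
    by (subst complex_norm_square) (rule mult.commute)
  finally have "z * S = complex_of_real (cmod S)"
    using False by (simp add: power2_eq_square)
  hence "Re (z * S) = cmod S"
    by simp
  moreover have "cmod z = 1"
    using False by (simp add: z_def norm_divide)
  ultimately show ?thesis
    by (rule that[rotated])
qed (rule that[of 1], simp_all)

text \<open>The test vector \<open>e\<^sub>b + z e\<^sub>d\<close>, with \<open>|z| = 1\<close> chosen to make the cross term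
  \<open>2 Re (z \<Sum>\<^sub>u cnj (H\<^sub>u\<^sub>b) H\<^sub>u\<^sub>d)\<close> of \<open>\<parallel>H (e\<^sub>b + z e\<^sub>d)\<parallel>\<^sup>2\<close> equal to twice its modulus.\<close>

lemma norm_sq_bound_pair_test:
  fixes A :: "('n::finite \<times> 'n) set"
  assumes bound: "norm_sq_bound (herm A) 3" and "b \<noteq> d"
  shows "real (card (neighbours A b)) + real (card (neighbours A d))
      + 2 * cmod (\<Sum>u\<in>UNIV. cnj (hentry A u b) * hentry A u d) < 6"
proof -
  define S where "S = (\<Sum>u\<in>UNIV. cnj (hentry A u b) * hentry A u d)"
  obtain z where z1: "cmod z = 1" and zS: "Re (z * S) = cmod S"
    by (rule unimodular_rotation)
  define w :: "complex^'n" where "w = axis b 1 + axis d z"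
  have w: "w $ x = (if x = b then 1 else 0) + (if x = d then z else 0)" for x
    by (simp add: w_def axis_def)
  have Hw: "(herm A *v w) $ x = hentry A x b + hentry A x d * z" for x
  proof -
    have "(herm A *v w) $ x
        = (\<Sum>j\<in>UNIV. (if j = b then hentry A x j else 0) + (if j = d then hentry A x j * z else 0))"
      unfolding matrix_vector_mult_component w by (intro sum.cong refl) (simp add: distrib_left)
    thus ?thesis
      by (simp add: sum.distrib)
  qed
  have "(norm (herm A *v w))\<^sup>2 = (\<Sum>x\<in>UNIV. (cmod (hentry A x b))\<^sup>2 + (cmod (hentry A x d))\<^sup>2
      + 2 * Re (z * (cnj (hentry A x b) * hentry A x d)))"
    unfolding norm_vec_sq Hw norm_add_sq_complex
    by (intro sum.cong refl) (simp add: norm_mult z1 mult_ac)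
  also have "\<dots> = (\<Sum>x\<in>UNIV. (cmod (hentry A x b))\<^sup>2) + (\<Sum>x\<in>UNIV. (cmod (hentry A x d))\<^sup>2)
      + 2 * (\<Sum>x\<in>UNIV. Re (z * (cnj (hentry A x b) * hentry A x d)))"
    by (simp only: sum.distrib sum_distrib_left)
  also have "(\<Sum>x\<in>UNIV. Re (z * (cnj (hentry A x b) * hentry A x d))) = Re (z * S)"
    unfolding S_def sum_distrib_left Re_sum ..
  finally have norm_Hw: "(norm (herm A *v w))\<^sup>2
      = real (card (neighbours A b)) + real (card (neighbours A d)) + 2 * cmod S"
    unfolding zS sum_norm_hentry_sq .
  have norm_w: "(norm w)\<^sup>2 = 2"
  proof -
    have "(norm w)\<^sup>2 = (\<Sum>x\<in>UNIV. (if x = b then 1 else 0) + (if x = d then 1 else (0::real)))"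
      unfolding norm_vec_sq w by (intro sum.cong refl) (use \<open>b \<noteq> d\<close> z1 in auto)
    thus ?thesis
      by (simp add: sum.distrib)
  qed
  have "w \<noteq> 0"
  proof
    assume "w = 0"
    thus False
      using \<open>b \<noteq> d\<close> w[of b] by simp
  qed
  hence "(norm (herm A *v w))\<^sup>2 < 3 * (norm w)\<^sup>2"
    using bound unfolding norm_sq_bound_def by blast
  thus ?thesis
    unfolding norm_Hw norm_w S_def by simp
qed

lemma sum_cnj_hentry_mult_common_neighbours:
  fixes A :: "('n::finite \<times> 'n) set"
  shows "(\<Sum>u\<in>UNIV. cnj (hentry A u b) * hentry A u d)
      = (\<Sum>u\<in>neighbours A b \<inter> neighbours A d. cnj (hentry A u b) * hentry A u d)"
proof (rule sum.mono_neutral_right)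
  show "\<forall>u\<in>UNIV - neighbours A b \<inter> neighbours A d. cnj (hentry A u b) * hentry A u d = 0"
  proof
    fix u
    assume "u \<in> UNIV - neighbours A b \<inter> neighbours A d"
    hence "\<not> und A u b \<or> \<not> und A u d"
      using und_commute[of A u b] und_commute[of A u d] by (simp add: mem_neighbours_iff)
    thus "cnj (hentry A u b) * hentry A u d = 0"
      by (simp add: hentry_eq_0_iff)
  qed
qed simp_all

lemma neighbours_inter_ne_singleton:
  fixes A :: "('n::finite \<times> 'n) set"
  assumes "norm_sq_bound (herm A) 3" and "b \<noteq> d"
    and "card (neighbours A b) = 2" "card (neighbours A d) = 2"
  shows "neighbours A b \<inter> neighbours A d \<noteq> {c}"
proof
  assume common: "neighbours A b \<inter> neighbours A d = {c}"
  hence "und A b c" "und A d c"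
    by (auto simp: mem_neighbours_iff)
  have "(\<Sum>u\<in>UNIV. cnj (hentry A u b) * hentry A u d) = cnj (hentry A c b) * hentry A c d"
    unfolding sum_cnj_hentry_mult_common_neighbours common by simp
  hence "cmod (\<Sum>u\<in>UNIV. cnj (hentry A u b) * hentry A u d) = 1"
    using \<open>und A b c\<close> \<open>und A d c\<close> und_commute[of A c] by (simp add: norm_mult norm_hentry)
  thus False
    using norm_sq_bound_pair_test[OF assms(1,2)] assms(3,4) by simp
qed

text \<open>For opposite vertices \<open>v\<^sub>1, v\<^sub>3\<close> of a four-cycle, the sum in the pair test is
  \<open>cnj (H\<^sub>0\<^sub>1 H\<^sub>3\<^sub>0) (1 + gain)\<close>, of modulus at least \<open>1\<close> unless the gain, a fourth root of unity, is \<open>-1\<close>.\<close>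

lemma c4_gain_if_norm_sq_bound:
  fixes A :: "('n::finite \<times> 'n) set"
  assumes bound: "norm_sq_bound (herm A) 3" and fr: "c4_frame A v0 v1 v2 v3"
    and n1: "neighbours A v1 = {v0,v2}" and n3: "neighbours A v3 = {v0,v2}"
  shows "cycle_gain A v0 v1 v2 v3 = -1"
proof (rule ccontr)
  assume gain: "cycle_gain A v0 v1 v2 v3 \<noteq> -1"
  have d: "distinct [v0,v1,v2,v3]"
    using fr by (simp add: c4_frame_def)
  have U: "und A v0 v1" "und A v1 v2" "und A v2 v3" "und A v3 v0"
    using fr by (auto simp: c4_frame_def)
  let ?S = "hentry A v1 v0 * hentry A v0 v3 + hentry A v1 v2 * hentry A v2 v3"
  have "(\<Sum>u\<in>UNIV. cnj (hentry A u v1) * hentry A u v3)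
      = (\<Sum>u\<in>{v0,v2}. cnj (hentry A u v1) * hentry A u v3)"
    unfolding sum_cnj_hentry_mult_common_neighbours n1 n3 by simp
  also have "\<dots> = ?S"
    using d by (simp add: cnj_hentry)
  finally have S: "(\<Sum>u\<in>UNIV. cnj (hentry A u v1) * hentry A u v3) = ?S" .
  have "hentry A v0 v1 * hentry A v3 v0 * ?S
      = (hentry A v0 v1 * hentry A v1 v0) * (hentry A v3 v0 * hentry A v0 v3) + cycle_gain A v0 v1 v2 v3"
    by (simp add: cycle_gain_def algebra_simps)
  also have "\<dots> = 1 + cycle_gain A v0 v1 v2 v3"
    using hentry_mult_commute[OF U(1)] hentry_mult_commute[OF U(4)] by simp
  finally have e: "hentry A v0 v1 * hentry A v3 v0 * ?S = 1 + cycle_gain A v0 v1 v2 v3" .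
  have "cmod (hentry A v0 v1 * hentry A v3 v0) = 1"
    using U by (simp add: norm_mult norm_hentry)
  hence "cmod ?S = cmod (1 + cycle_gain A v0 v1 v2 v3)"
    using arg_cong[OF e, of cmod] by (simp add: norm_mult)
  moreover have "1 \<le> cmod (1 + cycle_gain A v0 v1 v2 v3)"
    using cycle_gain_cases[OF fr] gain by (auto simp: cmod_def)
  ultimately have "6 \<le> real (card (neighbours A v1)) + real (card (neighbours A v3))
      + 2 * cmod (\<Sum>u\<in>UNIV. cnj (hentry A u v1) * hentry A u v3)"
    unfolding S n1 n3 using d by simp
  thus False
    using norm_sq_bound_pair_test[OF bound, of v1 v3] d by simp
qed

section \<open>Components of a digraph satisfying the norm bound\<close>

lemma not_mem_neighbours_self: "\<forall>x. (x,x) \<notin> A \<Longrightarrow> u \<notin> neighbours A u"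
  by (simp add: neighbours_def und_def)

lemma neighbours_subset_weak_component:
  "C \<in> weak_components A \<Longrightarrow> x \<in> C \<Longrightarrow> neighbours A x \<subseteq> C"
  by (auto simp: neighbours_def intro: weak_component_und_closed)

lemma weak_component_eq_if_neighbours_closed:
  assumes "C \<in> weak_components A" "S \<subseteq> C" "x \<in> S" "\<And>a. a \<in> S \<Longrightarrow> neighbours A a \<subseteq> S"
  shows "S = C"
  using weak_component_eqI[OF assms(1-3)] assms(4) by (auto simp: neighbours_def)

lemma card_2_obtain_other:
  assumes "card S = 2" "x \<in> S"
  obtains y where "y \<noteq> x" "S = {x, y}"
proof -
  obtain a b where "S = {a, b}" "a \<noteq> b"
    using assms(1) by (auto simp: card_2_iff)
  thus ?thesis
    using that assms(2) by (metis insert_commute insert_iff singletonD)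
qed

lemma card_le_2_eq_doubleton:
  assumes "finite S" "card S \<le> 2" "x \<in> S" "y \<in> S" "x \<noteq> y"
  shows "S = {x, y}"
proof -
  have "{x, y} \<subseteq> S" "card {x, y} = 2"
    using assms by auto
  thus ?thesis
    using card_subset_eq[OF assms(1)] card_mono[OF assms(1)] assms(2) by (metis le_antisym)
qed

lemma card_le_1_eq_singleton:
  assumes "finite S" "card S \<le> 1" "x \<in> S"
  shows "S = {x}"
  using assms card_le_Suc0_iff_eq[OF assms(1)] by auto

lemma und_iso_pathI:
  assumes "distinct xs" and C: "C = set xs" and len: "length xs = Suc k"
    and adj: "\<forall>i\<in>{0..k}. \<forall>j\<in>{0..k}. xs ! j \<in> neighbours A (xs ! i) \<longleftrightarrow> i = j + 1 \<or> j = i + 1"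
  shows "und_iso_path A C k"
  unfolding und_iso_path_def
proof (intro exI conjI)
  have "{0..k} = {..<length xs}"
    using len by auto
  thus "bij_betw ((!) xs) {0..k} C"
    using bij_betw_nth[OF assms(1) refl C] by simp
  show "\<forall>i\<in>{0..k}. \<forall>j\<in>{0..k}. und A (xs ! i) (xs ! j) \<longleftrightarrow> i = j + 1 \<or> j = i + 1"
    using adj by (simp add: neighbours_def)
qed

lemma und_iso_path_3:
  assumes "distinct [a, b, c, d]" and "C = {a, b, c, d}"
    and "neighbours A a = {b}" "neighbours A b = {a, c}" "neighbours A c = {b, d}" "neighbours A d = {c}"
  shows "und_iso_path A C 3"
proof (rule und_iso_pathI[of "[a, b, c, d]"])
  have "{0..3::nat} = {0, 1, 2, 3}"
    by auto
  thus "\<forall>i\<in>{0..3}. \<forall>j\<in>{0..3}. [a, b, c, d] ! j \<in> neighbours A ([a, b, c, d] ! i) \<longleftrightarrow> i = j + 1 \<or> j = i + 1"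
    using assms by (simp add: eval_nat_numeral; blast)
qed (use assms in auto)

lemma und_iso_path_2:
  assumes "distinct [a, b, c]" and "C = {a, b, c}"
    and "neighbours A a = {b}" "neighbours A b = {a, c}" "neighbours A c = {b}"
  shows "und_iso_path A C 2"
proof (rule und_iso_pathI[of "[a, b, c]"])
  have "{0..2::nat} = {0, 1, 2}"
    by auto
  thus "\<forall>i\<in>{0..2}. \<forall>j\<in>{0..2}. [a, b, c] ! j \<in> neighbours A ([a, b, c] ! i) \<longleftrightarrow> i = j + 1 \<or> j = i + 1"
    using assms by (simp add: eval_nat_numeral; blast)
qed (use assms in auto)

lemma und_iso_path_1:
  assumes "a \<noteq> b" and "C = {a, b}" and "neighbours A a = {b}" "neighbours A b = {a}"
  shows "und_iso_path A C 1"
proof (rule und_iso_pathI[of "[a, b]"])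
  have "{0..1::nat} = {0, 1}"
    by auto
  thus "\<forall>i\<in>{0..1}. \<forall>j\<in>{0..1}. [a, b] ! j \<in> neighbours A ([a, b] ! i) \<longleftrightarrow> i = j + 1 \<or> j = i + 1"
    using assms by simp
qed (use assms in auto)

lemma und_iso_path_0:
  assumes "C = {a}" and "neighbours A a = {}"
  shows "und_iso_path A C 0"
  by (rule und_iso_pathI[of "[a]"]) (use assms in auto)

lemma und_iso_C4I:
  assumes irr: "\<forall>x. (x,x) \<notin> A" and fr: "c4_frame A v0 v1 v2 v3" and C: "C = {v0, v1, v2, v3}"
  shows "und_iso_C4 A C"
  unfolding und_iso_C4_def
proof (intro exI conjI)
  let ?v = "[v0, v1, v2, v3]"
  show "bij_betw ((!) ?v) {0..<4} C"
    by (rule bij_betw_nth) (use fr C in \<open>auto simp: c4_frame_def\<close>)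
  have "\<not> und A x x" for x
    using irr by (simp add: und_def)
  moreover have "?v ! 0 = v0" "?v ! 1 = v1" "?v ! 2 = v2" "?v ! 3 = v3"
    by (simp_all add: numeral_eq_Suc)
  moreover have "{0..<4::nat} = {0, 1, 2, 3}"
    by auto
  ultimately show "\<forall>i\<in>{0..<4}. \<forall>j\<in>{0..<4}.
      und A (?v ! i) (?v ! j) \<longleftrightarrow> j = (i + 1) mod 4 \<or> i = (j + 1) mod 4"
    using fr und_commute[of A] unfolding c4_frame_def by simp
qed

lemma weak_component_max_degree_1:
  assumes irr: "\<forall>x. (x,x) \<notin> A" and C: "C \<in> weak_components A"
    and deg: "\<And>u. u \<in> C \<Longrightarrow> card (neighbours A u) \<le> 1"
    and fin: "\<And>u. finite (neighbours A u)"
  shows "und_iso_path A C 0 \<or> und_iso_path A C 1"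
proof -
  obtain x where x: "x \<in> C"
    using weak_component_nonempty[OF C] by blast
  show ?thesis
  proof (cases "neighbours A x = {}")
    case True
    have "{x} = C"
      by (rule weak_component_eq_if_neighbours_closed[OF C]) (use x True in auto)
    thus ?thesis
      using und_iso_path_0[OF _ True] by simp
  next
    case False
    then obtain y where y: "y \<in> neighbours A x"
      by blast
    have nx: "neighbours A x = {y}"
      by (rule card_le_1_eq_singleton[OF fin deg[OF x] y])
    have yC: "y \<in> C"
      using neighbours_subset_weak_component[OF C x] y by blast
    have "x \<in> neighbours A y"
      using y neighbours_commute by metis
    hence ny: "neighbours A y = {x}"
      by (rule card_le_1_eq_singleton[OF fin deg[OF yC]])
    have "{x, y} = C"
      by (rule weak_component_eq_if_neighbours_closed[OF C]) (use x yC nx ny in auto)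
    moreover have "x \<noteq> y"
      using not_mem_neighbours_self[OF irr] y by blast
    ultimately show ?thesis
      using und_iso_path_1[OF _ _ nx ny] by simp
  qed
qed

text \<open>A vertex \<open>c\<close> with neighbours \<open>b, d\<close>, where \<open>b\<close> has degree 2 and \<open>d\<close> is a leaf: the other
  neighbour \<open>a\<close> of \<open>b\<close> must be a leaf too, since otherwise \<open>a\<close> and \<open>c\<close> share exactly one neighbour.\<close>

lemma weak_component_path_3:
  assumes irr: "\<forall>x. (x,x) \<notin> A" and C: "C \<in> weak_components A" and "c \<in> C"
    and fin: "\<And>u. finite (neighbours A u)" and deg: "\<And>u. card (neighbours A u) \<le> 2"
    and no_single: "\<And>b d c. b \<noteq> d \<Longrightarrow> card (neighbours A b) = 2 \<Longrightarrow> card (neighbours A d) = 2 \<Longrightarrow>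
      neighbours A b \<inter> neighbours A d \<noteq> {c}"
    and nc: "neighbours A c = {b, d}" and "b \<noteq> d" and "d \<notin> neighbours A b"
    and nb2: "card (neighbours A b) = 2" and nd: "neighbours A d = {c}"
  shows "und_iso_path A C 3"
proof -
  note self = not_mem_neighbours_self[OF irr]
  have c_nb: "c \<in> neighbours A b"
    using nc neighbours_commute by fastforce
  obtain a where "a \<noteq> c" and nb: "neighbours A b = {c, a}"
    using card_2_obtain_other[OF nb2 c_nb] by blast
  have b_na: "b \<in> neighbours A a"
    using nb neighbours_commute by fastforce
  have "a \<noteq> d" "a \<noteq> b" "c \<noteq> b" "c \<noteq> d"
    using \<open>d \<notin> neighbours A b\<close> nb nc self[of b] self[of c] by auto
  have "card (neighbours A a) \<noteq> 2"
  proof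
    assume na2: "card (neighbours A a) = 2"
    then obtain z where "z \<noteq> b" and na: "neighbours A a = {b, z}"
      using card_2_obtain_other[OF _ b_na] by blast
    have "z \<noteq> d"
      using na nd \<open>a \<noteq> c\<close> neighbours_commute[of d A a] by auto
    hence "neighbours A a \<inter> neighbours A c = {b}"
      using na nc \<open>z \<noteq> b\<close> by auto
    moreover have "card (neighbours A c) = 2"
      using nc \<open>b \<noteq> d\<close> by simp
    ultimately show False
      using no_single[OF \<open>a \<noteq> c\<close> na2] by blast
  qed
  moreover have "card (neighbours A a) \<noteq> 0"
    using b_na fin by auto
  ultimately have na: "neighbours A a = {b}"
    using card_le_1_eq_singleton[OF fin _ b_na] deg[of a] by simp
  have "b \<in> C" "d \<in> C"
    using neighbours_subset_weak_component[OF C \<open>c \<in> C\<close>] nc by auto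
  hence "a \<in> C"
    using neighbours_subset_weak_component[OF C] nb by blast
  have "{a, b, c, d} = C"
    by (rule weak_component_eq_if_neighbours_closed[OF C])
      (use \<open>a \<in> C\<close> \<open>b \<in> C\<close> \<open>c \<in> C\<close> \<open>d \<in> C\<close> na nb nc nd in auto)
  moreover have "distinct [a, b, c, d]"
    using \<open>a \<noteq> c\<close> \<open>a \<noteq> d\<close> \<open>a \<noteq> b\<close> \<open>c \<noteq> b\<close> \<open>c \<noteq> d\<close> \<open>b \<noteq> d\<close> by auto
  ultimately show ?thesis
    using und_iso_path_3[OF _ _ na _ nc nd] nb by (simp add: insert_commute)
qed

lemma weak_component_c4:
  assumes irr: "\<forall>x. (x,x) \<notin> A" and C: "C \<in> weak_components A" and "c \<in> C"
    and fin: "\<And>u. finite (neighbours A u)" and deg: "\<And>u. card (neighbours A u) \<le> 2"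
    and no_single: "\<And>b d c. b \<noteq> d \<Longrightarrow> card (neighbours A b) = 2 \<Longrightarrow> card (neighbours A d) = 2 \<Longrightarrow>
      neighbours A b \<inter> neighbours A d \<noteq> {c}"
    and nc: "neighbours A c = {b, d}" and "b \<noteq> d" and "d \<notin> neighbours A b"
    and nb2: "card (neighbours A b) = 2" and nd2: "card (neighbours A d) = 2"
  obtains a where "c4_frame A c b a d" "C = {c, b, a, d}"
    "neighbours A b = {c, a}" "neighbours A d = {c, a}"
proof -
  have "c \<in> neighbours A b" "c \<in> neighbours A d"
    using nc neighbours_commute by fastforce+
  then obtain a e where "a \<noteq> c" and nb: "neighbours A b = {c, a}"
    and "e \<noteq> c" and nd: "neighbours A d = {c, e}"
    using card_2_obtain_other nb2 nd2 by metis
  have "a \<noteq> d" "e \<noteq> b"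
    using \<open>d \<notin> neighbours A b\<close> neighbours_commute[of b A d] nb nd by auto
  have "a = e"
  proof (rule ccontr)
    assume "a \<noteq> e"
    hence "neighbours A b \<inter> neighbours A d = {c}"
      using nb nd \<open>a \<noteq> d\<close> \<open>e \<noteq> b\<close> by auto
    thus False
      using no_single[OF \<open>b \<noteq> d\<close> nb2 nd2] by blast
  qed
  have "b \<in> neighbours A a" "d \<in> neighbours A a"
    using nb nd \<open>a = e\<close> neighbours_commute by fastforce+
  hence na: "neighbours A a = {b, d}"
    using card_le_2_eq_doubleton[OF fin deg] \<open>b \<noteq> d\<close> by blast
  have "c \<noteq> b" "c \<noteq> d" "a \<noteq> b"
    using \<open>c \<in> neighbours A b\<close> \<open>c \<in> neighbours A d\<close> \<open>b \<in> neighbours A a\<close>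
      not_mem_neighbours_self[OF irr] by auto
  have "b \<in> C" "d \<in> C"
    using neighbours_subset_weak_component[OF C \<open>c \<in> C\<close>] nc by auto
  hence "a \<in> C"
    using neighbours_subset_weak_component[OF C] nb by blast
  have "{c, b, a, d} = C"
    by (rule weak_component_eq_if_neighbours_closed[OF C])
      (use \<open>a \<in> C\<close> \<open>b \<in> C\<close> \<open>c \<in> C\<close> \<open>d \<in> C\<close> na nb nc nd \<open>a = e\<close> in auto)
  moreover have "c4_frame A c b a d"
    unfolding c4_frame_def mem_neighbours_iff[symmetric]
    using nb nc nd na \<open>a = e\<close> \<open>a \<noteq> c\<close> \<open>a \<noteq> d\<close> \<open>a \<noteq> b\<close> \<open>c \<noteq> b\<close> \<open>c \<noteq> d\<close> \<open>b \<noteq> d\<close> by auto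
  ultimately show ?thesis
    using that nb nd \<open>a = e\<close> by blast
qed

lemma neighbours_of_degree_2_nonadjacent:
  assumes irr: "\<forall>x. (x,x) \<notin> A"
    and fin: "\<And>u. finite (neighbours A u)" and deg: "\<And>u. card (neighbours A u) \<le> 2"
    and no_single: "\<And>b d c. b \<noteq> d \<Longrightarrow> card (neighbours A b) = 2 \<Longrightarrow> card (neighbours A d) = 2 \<Longrightarrow>
      neighbours A b \<inter> neighbours A d \<noteq> {c}"
    and nc: "neighbours A c = {b, d}" and "b \<noteq> d"
  shows "d \<notin> neighbours A b"
proof
  assume "d \<in> neighbours A b"
  hence "b \<in> neighbours A d"
    using neighbours_commute by metis
  have "c \<in> neighbours A b" "c \<in> neighbours A d"
    using nc neighbours_commute by fastforce+
  moreover have "c \<noteq> b" "c \<noteq> d"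
    using nc not_mem_neighbours_self[OF irr, of c] by auto
  ultimately have "neighbours A b = {c, d}" "neighbours A d = {c, b}"
    using card_le_2_eq_doubleton[OF fin deg] \<open>d \<in> neighbours A b\<close> \<open>b \<in> neighbours A d\<close> by blast+
  thus False
    using no_single[OF \<open>b \<noteq> d\<close>, of c] \<open>b \<noteq> d\<close> \<open>c \<noteq> b\<close> \<open>c \<noteq> d\<close> by auto
qed

lemma weak_component_through_degree_2_vertex:
  assumes irr: "\<forall>x. (x,x) \<notin> A" and C: "C \<in> weak_components A" and "c \<in> C"
    and fin: "\<And>u. finite (neighbours A u)" and deg: "\<And>u. card (neighbours A u) \<le> 2"
    and no_single: "\<And>b d c. b \<noteq> d \<Longrightarrow> card (neighbours A b) = 2 \<Longrightarrow> card (neighbours A d) = 2 \<Longrightarrow>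
      neighbours A b \<inter> neighbours A d \<noteq> {c}"
    and nc: "neighbours A c = {b, d}" and "b \<noteq> d"
  shows "(\<exists>k\<le>3. und_iso_path A C k) \<or> (\<exists>v0 v1 v2 v3. c4_frame A v0 v1 v2 v3 \<and> C = {v0, v1, v2, v3}
      \<and> neighbours A v1 = {v0, v2} \<and> neighbours A v3 = {v0, v2})"
proof -
  have c_nb: "c \<in> neighbours A b" and c_nd: "c \<in> neighbours A d"
    using nc neighbours_commute by fastforce+
  have deg12: "card (neighbours A x) = 1 \<or> card (neighbours A x) = 2" if "c \<in> neighbours A x" for x
  proof -
    have "card (neighbours A x) \<noteq> 0"
      using that fin[of x] by auto
    thus ?thesis
      using deg[of x] by linarith
  qed
  have nonadj: "d \<notin> neighbours A b"
    by (rule neighbours_of_degree_2_nonadjacent[OF irr fin deg no_single nc \<open>b \<noteq> d\<close>])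
  hence "b \<notin> neighbours A d"
    using neighbours_commute by metis
  consider "card (neighbours A b) = 2" "card (neighbours A d) = 2"
    | "card (neighbours A b) = 2" "card (neighbours A d) = 1"
    | "card (neighbours A b) = 1" "card (neighbours A d) = 2"
    | "card (neighbours A b) = 1" "card (neighbours A d) = 1"
    using deg12[OF c_nb] deg12[OF c_nd] by argo
  thus ?thesis
  proof cases
    case 1
    then obtain a where "c4_frame A c b a d" "C = {c, b, a, d}"
      "neighbours A b = {c, a}" "neighbours A d = {c, a}"
      using weak_component_c4[OF irr C \<open>c \<in> C\<close> fin deg no_single nc \<open>b \<noteq> d\<close> nonadj] by blast
    thus ?thesis
      by (intro disjI2 exI conjI)
  next
    case 2
    hence nd: "neighbours A d = {c}"
      using card_le_1_eq_singleton[OF fin _ c_nd] by simp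
    have "und_iso_path A C 3"
      by (rule weak_component_path_3[of A C c b d, OF irr C \<open>c \<in> C\<close> fin deg no_single nc
            \<open>b \<noteq> d\<close> nonadj 2(1) nd])
    thus ?thesis
      by (intro disjI1 exI conjI) simp_all
  next
    case 3
    hence nb: "neighbours A b = {c}"
      using card_le_1_eq_singleton[OF fin _ c_nb] by simp
    have "neighbours A c = {d, b}" "d \<noteq> b"
      using nc \<open>b \<noteq> d\<close> by auto
    hence "und_iso_path A C 3"
      by (intro weak_component_path_3[of A C c d b, OF irr C \<open>c \<in> C\<close> fin deg no_single _ _
            \<open>b \<notin> neighbours A d\<close> 3(2) nb])
    thus ?thesis
      by (intro disjI1 exI conjI) simp_all
  next
    case 4
    hence nb: "neighbours A b = {c}" and nd: "neighbours A d = {c}"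
      using card_le_1_eq_singleton[OF fin _ c_nb] card_le_1_eq_singleton[OF fin _ c_nd] by simp_all
    have "{b, c, d} = C"
      by (rule weak_component_eq_if_neighbours_closed[OF C])
        (use \<open>c \<in> C\<close> neighbours_subset_weak_component[OF C \<open>c \<in> C\<close>] nc nb nd in auto)
    moreover have "c \<noteq> b" "c \<noteq> d"
      using nc not_mem_neighbours_self[OF irr, of c] by auto
    ultimately have "und_iso_path A C 2"
      using und_iso_path_2[of b c d C A] nb nc nd \<open>b \<noteq> d\<close> by auto
    thus ?thesis
      by (intro disjI1 exI conjI) simp_all
  qed
qed

lemma weak_component_structure:
  assumes irr: "\<forall>x. (x,x) \<notin> A" and C: "C \<in> weak_components A"
    and fin: "\<And>u. finite (neighbours A u)" and deg: "\<And>u. card (neighbours A u) \<le> 2"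
    and no_single: "\<And>b d c. b \<noteq> d \<Longrightarrow> card (neighbours A b) = 2 \<Longrightarrow> card (neighbours A d) = 2 \<Longrightarrow>
      neighbours A b \<inter> neighbours A d \<noteq> {c}"
  shows "(\<exists>k\<le>3. und_iso_path A C k) \<or> (\<exists>v0 v1 v2 v3. c4_frame A v0 v1 v2 v3 \<and> C = {v0, v1, v2, v3}
      \<and> neighbours A v1 = {v0, v2} \<and> neighbours A v3 = {v0, v2})"
proof (cases "\<exists>c\<in>C. card (neighbours A c) = 2")
  case True
  then obtain c b d where "c \<in> C" "b \<noteq> d" and nc: "neighbours A c = {b, d}"
    by (auto simp: card_2_iff)
  thus ?thesis
    by (intro weak_component_through_degree_2_vertex[OF irr C _ fin deg no_single])
next
  case False
  have "card (neighbours A u) \<le> 1" if "u \<in> C" for u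
    using deg[of u] False that by force
  hence "und_iso_path A C 0 \<or> und_iso_path A C 1"
    by (rule weak_component_max_degree_1[OF irr C _ fin])
  thus ?thesis
    by (elim disjE) (intro disjI1 exI conjI; simp)+
qed

lemma admissible_if_norm_sq_bound:
  fixes A :: "('n::finite \<times> 'n) set"
  assumes irr: "\<forall>x. (x,x) \<notin> A" and bound: "norm_sq_bound (herm A) 3" and C: "C \<in> weak_components A"
  shows "admissible_component A C"
proof -
  have "finite (neighbours A u)" for u
    by simp
  moreover have "card (neighbours A u) \<le> 2" for u
    by (rule card_neighbours_le_2[OF bound])
  moreover have "neighbours A b \<inter> neighbours A d \<noteq> {c}"
    if "b \<noteq> d" "card (neighbours A b) = 2" "card (neighbours A d) = 2" for b d c
    by (rule neighbours_inter_ne_singleton[OF bound that])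
  ultimately have "(\<exists>k\<le>3. und_iso_path A C k) \<or> (\<exists>v0 v1 v2 v3. c4_frame A v0 v1 v2 v3
      \<and> C = {v0, v1, v2, v3} \<and> neighbours A v1 = {v0, v2} \<and> neighbours A v3 = {v0, v2})"
    by (rule weak_component_structure[OF irr C])
  thus ?thesis
  proof (elim disjE exE conjE)
    fix k
    assume "k \<le> 3" "und_iso_path A C k"
    thus ?thesis
      unfolding admissible_component_def by blast
  next
    fix v0 v1 v2 v3
    assume fr: "c4_frame A v0 v1 v2 v3" and "C = {v0, v1, v2, v3}"
      and "neighbours A v1 = {v0, v2}" "neighbours A v3 = {v0, v2}"
    hence "cycle_gain A v0 v1 v2 v3 = -1"
      using c4_gain_if_norm_sq_bound[OF bound] by blast
    thus ?thesis
      unfolding admissible_component_def \<open>C = {v0, v1, v2, v3}\<close>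
      using c4_tilde_or_strongly_connected_if_gain[OF irr fr] und_iso_C4I[OF irr fr refl] by blast
  qed
qed

lemma norm_sq_bound_herm_iff_admissible:
  fixes A :: "('n::finite \<times> 'n) set"
  assumes irr: "\<forall>x. (x,x) \<notin> A"
  shows "norm_sq_bound (herm A) 3 \<longleftrightarrow> (\<forall>C\<in>weak_components A. admissible_component A C)"
  using admissible_if_norm_sq_bound[OF irr] herm_sqnorm_on_admissible[OF irr]
    norm_sq_bound_herm_if_weak_components by metis

lemma minus_sqrt_less_less_sqrt_iff: "- sqrt c < r \<and> r < sqrt c \<longleftrightarrow> r\<^sup>2 < c"
  using real_sqrt_less_iff[of "r\<^sup>2" c] by (auto simp: abs_less_iff)

theorem theorem9p3:
  fixes A :: "('n::finite \<times> 'n) set"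
  assumes irrefl: "\<forall>x. (x,x) \<notin> A"
  shows "(\<forall>l. mat_eigenvalue (herm A) l \<longrightarrow>
            (\<exists>r::real. l = complex_of_real r \<and> - sqrt 3 < r \<and> r < sqrt 3))
     \<longleftrightarrow>
     (\<forall>C \<in> weak_components A.
        (\<exists>k \<le> 3. und_iso_path A C k)
      \<or> (und_iso_C4 A C \<and>
          (iso_tilde_C4 A C \<or>
           (strongly_connected_on A C \<and> card (digons_on A C) = 2))))"
  using hermitian_eigenvalues_bound_iff[OF hermitian_herm, of A 3]
    norm_sq_bound_herm_iff_admissible[OF irrefl]
  unfolding minus_sqrt_less_less_sqrt_iff admissible_component_def by simp

end
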